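(* Let $l_1(\Gamma, \alpha, \mathcal{A})$ be the set of all families $a = \{a_g\}_{g \in \Gamma}$ of elements of $\mathcal{A}$ such that $a_x \in \mathcal{A}\alpha_x(1)$ and $a_{-x} \in \alpha_x(1)\mathcal{A}$ for all $x \in \Gamma^+$, and $\sum_{g \in \Gamma} \|a_g\| < \infty$, with norm $\|a\| = \sum_{g}\|a_g\|$, pointwise addition and scalar multiplication, involution $(a^* )_g := a_{-g}^*$, and multiplication $$(a \cdot b)_g := \begin{cases} \sum_{\substack{g=x-y \\ x,y>0}} a_x \alpha_{x-y}(b_{-y}) + \sum_{\substack{g=y-x \\ x,y>0}} L_x(a_{-x} b_y) + \sum_{\substack{g=x+y \\ x,y \geq 0}} a_x \alpha_x(b_y), & \text{if } 0 \leq g, \\ \sum_{\substack{g=x-y \\ x,y>0}} \alpha_{y-x}(a_x) b_{-y} + \sum_{\substack{g=y-x \\ x,y>0}} L_y(a_{-x} b_y) + \sum_{\substack{g=-x-y \\ x,y \geq 0}} \alpha_y(a_{-x}) b_{-y}, & \text{if } g < 0, \end{cases}$$ where $x,y$ run through $\Gamma^+$. Then $l_1(\Gamma, \alpha, \mathcal{A})$ with these operations is a unital Banach *-algebra (with unit $1\delta_0$, the family equal to $1$ at $g=0$ and $0$ elsewhere).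
   Context: $\mathcal{A}$ is a C*-algebra with identity $1$, $\Gamma$ is a totally ordered abelian group with identity $0$ and positive cone $\Gamma^+ = \{x \in \Gamma: 0 \le x\}$, and $\alpha: \Gamma^+ \to \mathrm{End}(\mathcal{A})$ is a semigroup homomorphism ($\alpha_0 = \mathrm{Id}$, $\alpha_x\circ\alpha_y = \alpha_{x+y}$) by *-endomorphisms. The system $(\mathcal{A}, \Gamma^+, \alpha)$ is assumed finely representable, equivalently there is a (unique) complete transfer action $L$: continuous linear positive maps $L_x:\mathcal{A}\to\mathcal{A}$, $x\in\Gamma^+$, with $L_{x+y} = L_y \circ L_x$, $L_x(\alpha_x(a)b) = aL_x(b)$ and $\alpha_x(L_x(a)) = \alpha_x(1)a\alpha_x(1)$ for all $a,b\in\mathcal{A}$, $x,y\in\Gamma^+$. *)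

theory Defs
  imports "HOL-Analysis.Analysis"
begin

text \<open>The library has no class of complex normed algebras, so the complex
structure of the algebra is given by an explicit scalar multiplication sc
that extends the real scalar multiplication.\<close>

definition complex_scaling :: "(complex \<Rightarrow> 'a::real_normed_algebra_1 \<Rightarrow> 'a) \<Rightarrow> bool" where
  "complex_scaling sc \<longleftrightarrow>
     (\<forall>r a. sc (complex_of_real r) a = r *\<^sub>R a) \<and>
     (\<forall>c d a. sc (c + d) a = sc c a + sc d a) \<and>
     (\<forall>c a b. sc c (a + b) = sc c a + sc c b) \<and>
     (\<forall>c d a. sc (c * d) a = sc c (sc d a)) \<and>
     (\<forall>c a. norm (sc c a) = cmod c * norm a) \<and>
     (\<forall>c a b. sc c (a * b) = sc c a * b \<and> sc c (a * b) = a * sc c b)"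

definition cstar_algebra ::
  "(complex \<Rightarrow> 'a::{real_normed_algebra_1,banach} \<Rightarrow> 'a) \<Rightarrow> ('a \<Rightarrow> 'a) \<Rightarrow> bool" where
  "cstar_algebra sc st \<longleftrightarrow>
     complex_scaling sc \<and>
     (\<forall>a b. st (a + b) = st a + st b) \<and>
     (\<forall>c a. st (sc c a) = sc (cnj c) (st a)) \<and>
     (\<forall>a b. st (a * b) = st b * st a) \<and>
     (\<forall>a. st (st a) = a) \<and>
     (\<forall>a. norm (st a * a) = (norm a)\<^sup>2)"

definition positive_el :: "('a::real_normed_algebra_1 \<Rightarrow> 'a) \<Rightarrow> 'a \<Rightarrow> bool" where
  "positive_el st a \<longleftrightarrow> (\<exists>b. a = st b * b)"

definition complex_linear :: "(complex \<Rightarrow> 'a \<Rightarrow> 'a) \<Rightarrow> ('a::real_normed_algebra_1 \<Rightarrow> 'a) \<Rightarrow> bool" where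
  "complex_linear sc f \<longleftrightarrow> (\<forall>a b. f (a + b) = f a + f b) \<and> (\<forall>c a. f (sc c a) = sc c (f a))"

definition star_endomorphism ::
  "(complex \<Rightarrow> 'a \<Rightarrow> 'a) \<Rightarrow> ('a \<Rightarrow> 'a) \<Rightarrow> ('a::real_normed_algebra_1 \<Rightarrow> 'a) \<Rightarrow> bool" where
  "star_endomorphism sc st f \<longleftrightarrow> complex_linear sc f \<and>
     (\<forall>a b. f (a * b) = f a * f b) \<and> (\<forall>a. f (st a) = st (f a))"

definition endo_semigroup ::
  "(complex \<Rightarrow> 'a \<Rightarrow> 'a) \<Rightarrow> ('a \<Rightarrow> 'a) \<Rightarrow> ('g::linordered_ab_group_add \<Rightarrow> 'a::real_normed_algebra_1 \<Rightarrow> 'a) \<Rightarrow> bool" where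
  "endo_semigroup sc st \<alpha> \<longleftrightarrow>
     (\<forall>x\<ge>0. star_endomorphism sc st (\<alpha> x)) \<and>
     \<alpha> 0 = id \<and>
     (\<forall>x\<ge>0. \<forall>y\<ge>0. \<alpha> x \<circ> \<alpha> y = \<alpha> (x + y))"

definition complete_transfer_action ::
  "(complex \<Rightarrow> 'a \<Rightarrow> 'a) \<Rightarrow> ('a \<Rightarrow> 'a) \<Rightarrow> ('g::linordered_ab_group_add \<Rightarrow> 'a \<Rightarrow> 'a)
     \<Rightarrow> ('g \<Rightarrow> 'a::real_normed_algebra_1 \<Rightarrow> 'a) \<Rightarrow> bool" where
  "complete_transfer_action sc st \<alpha> L \<longleftrightarrow>
     (\<forall>x\<ge>0. continuous_on UNIV (L x) \<and> complex_linear sc (L x) \<and>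
             (\<forall>a. positive_el st a \<longrightarrow> positive_el st (L x a))) \<and>
     (\<forall>x\<ge>0. \<forall>y\<ge>0. L (x + y) = L y \<circ> L x) \<and>
     (\<forall>x\<ge>0. \<forall>a b. L x (\<alpha> x a * b) = a * L x b) \<and>
     (\<forall>x\<ge>0. \<forall>a. \<alpha> x (L x a) = \<alpha> x 1 * a * \<alpha> x 1)"

definition l1_set :: "('g::linordered_ab_group_add \<Rightarrow> 'a \<Rightarrow> 'a) \<Rightarrow> ('g \<Rightarrow> 'a::{real_normed_algebra_1,banach}) set" where
  "l1_set \<alpha> = {a. (\<forall>x\<ge>0. a x \<in> {c * \<alpha> x 1 | c. True} \<and> a (-x) \<in> {\<alpha> x 1 * c | c. True})
                  \<and> (\<lambda>g. norm (a g)) summable_on UNIV}"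

definition l1_norm :: "('g \<Rightarrow> 'a::real_normed_vector) \<Rightarrow> real" where
  "l1_norm a = infsum (\<lambda>g. norm (a g)) UNIV"

definition l1_add :: "('g \<Rightarrow> 'a::real_normed_vector) \<Rightarrow> ('g \<Rightarrow> 'a) \<Rightarrow> ('g \<Rightarrow> 'a)" where
  "l1_add a b = (\<lambda>g. a g + b g)"

definition l1_zero :: "'g \<Rightarrow> 'a::real_normed_vector" where
  "l1_zero = (\<lambda>g. 0)"

definition l1_scale :: "(complex \<Rightarrow> 'a \<Rightarrow> 'a) \<Rightarrow> complex \<Rightarrow> ('g \<Rightarrow> 'a) \<Rightarrow> ('g \<Rightarrow> 'a)" where
  "l1_scale sc c a = (\<lambda>g. sc c (a g))"

definition l1_star :: "('a \<Rightarrow> 'a) \<Rightarrow> ('g::ab_group_add \<Rightarrow> 'a) \<Rightarrow> ('g \<Rightarrow> 'a)" where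
  "l1_star st a = (\<lambda>g. st (a (-g)))"

definition l1_unit :: "'g::zero \<Rightarrow> 'a::real_normed_algebra_1" where
  "l1_unit = (\<lambda>g. if g = 0 then 1 else 0)"

definition l1_mult ::
  "('g::linordered_ab_group_add \<Rightarrow> 'a \<Rightarrow> 'a) \<Rightarrow> ('g \<Rightarrow> 'a \<Rightarrow> 'a)
     \<Rightarrow> ('g \<Rightarrow> 'a::{real_normed_algebra_1,banach}) \<Rightarrow> ('g \<Rightarrow> 'a) \<Rightarrow> ('g \<Rightarrow> 'a)" where
  "l1_mult \<alpha> L a b = (\<lambda>g.
     if 0 \<le> g then
       infsum (\<lambda>(x,y). a x * \<alpha> (x - y) (b (-y))) {(x,y). 0 < x \<and> 0 < y \<and> g = x - y}
     + infsum (\<lambda>(x,y). L x (a (-x) * b y)) {(x,y). 0 < x \<and> 0 < y \<and> g = y - x}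
     + infsum (\<lambda>(x,y). a x * \<alpha> x (b y)) {(x,y). 0 \<le> x \<and> 0 \<le> y \<and> g = x + y}
     else
       infsum (\<lambda>(x,y). \<alpha> (y - x) (a x) * b (-y)) {(x,y). 0 < x \<and> 0 < y \<and> g = x - y}
     + infsum (\<lambda>(x,y). L y (a (-x) * b y)) {(x,y). 0 < x \<and> 0 < y \<and> g = y - x}
     + infsum (\<lambda>(x,y). \<alpha> y (a (-x)) * b (-y)) {(x,y). 0 \<le> x \<and> 0 \<le> y \<and> g = -x - y})"

definition unital_banach_star_algebra ::
  "'b set \<Rightarrow> ('b \<Rightarrow> 'b \<Rightarrow> 'b) \<Rightarrow> 'b \<Rightarrow> (complex \<Rightarrow> 'b \<Rightarrow> 'b) \<Rightarrow> ('b \<Rightarrow> 'b \<Rightarrow> 'b)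
     \<Rightarrow> ('b \<Rightarrow> 'b) \<Rightarrow> ('b \<Rightarrow> real) \<Rightarrow> 'b \<Rightarrow> bool" where
  "unital_banach_star_algebra S add zero sc mul st nrm one \<longleftrightarrow>
   \<comment> \<open>closure\<close>
   zero \<in> S \<and> one \<in> S \<and>
   (\<forall>a\<in>S. \<forall>b\<in>S. add a b \<in> S \<and> mul a b \<in> S) \<and>
   (\<forall>c. \<forall>a\<in>S. sc c a \<in> S) \<and> (\<forall>a\<in>S. st a \<in> S) \<and>
   \<comment> \<open>complex vector space\<close>
   (\<forall>a\<in>S. \<forall>b\<in>S. \<forall>d\<in>S. add (add a b) d = add a (add b d)) \<and>
   (\<forall>a\<in>S. \<forall>b\<in>S. add a b = add b a) \<and>
   (\<forall>a\<in>S. add zero a = a) \<and>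
   (\<forall>a\<in>S. add a (sc (-1) a) = zero) \<and>
   (\<forall>a\<in>S. sc 1 a = a) \<and>
   (\<forall>c d. \<forall>a\<in>S. sc (c * d) a = sc c (sc d a)) \<and>
   (\<forall>c d. \<forall>a\<in>S. sc (c + d) a = add (sc c a) (sc d a)) \<and>
   (\<forall>c. \<forall>a\<in>S. \<forall>b\<in>S. sc c (add a b) = add (sc c a) (sc c b)) \<and>
   \<comment> \<open>norm\<close>
   (\<forall>a\<in>S. 0 \<le> nrm a \<and> (nrm a = 0 \<longleftrightarrow> a = zero)) \<and>
   (\<forall>a\<in>S. \<forall>b\<in>S. nrm (add a b) \<le> nrm a + nrm b) \<and>
   (\<forall>c. \<forall>a\<in>S. nrm (sc c a) = cmod c * nrm a) \<and>
   \<comment> \<open>completeness\<close>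
   (\<forall>f. (\<forall>n. f n \<in> S) \<longrightarrow>
        (\<forall>e>0. \<exists>N. \<forall>m\<ge>N. \<forall>n\<ge>N. nrm (add (f m) (sc (-1) (f n))) < e) \<longrightarrow>
        (\<exists>l\<in>S. (\<lambda>n. nrm (add (f n) (sc (-1) l))) \<longlonglongrightarrow> 0)) \<and>
   \<comment> \<open>Banach algebra\<close>
   (\<forall>a\<in>S. \<forall>b\<in>S. \<forall>d\<in>S. mul (mul a b) d = mul a (mul b d)) \<and>
   (\<forall>a\<in>S. \<forall>b\<in>S. \<forall>d\<in>S. mul a (add b d) = add (mul a b) (mul a d)) \<and>
   (\<forall>a\<in>S. \<forall>b\<in>S. \<forall>d\<in>S. mul (add a b) d = add (mul a d) (mul b d)) \<and>
   (\<forall>c. \<forall>a\<in>S. \<forall>b\<in>S. sc c (mul a b) = mul (sc c a) b \<and> sc c (mul a b) = mul a (sc c b)) \<and>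
   (\<forall>a\<in>S. \<forall>b\<in>S. nrm (mul a b) \<le> nrm a * nrm b) \<and>
   \<comment> \<open>unit\<close>
   (\<forall>a\<in>S. mul one a = a \<and> mul a one = a) \<and> nrm one = 1 \<and>
   \<comment> \<open>isometric involution\<close>
   (\<forall>a\<in>S. \<forall>b\<in>S. st (add a b) = add (st a) (st b)) \<and>
   (\<forall>c. \<forall>a\<in>S. st (sc c a) = sc (cnj c) (st a)) \<and>
   (\<forall>a\<in>S. \<forall>b\<in>S. st (mul a b) = mul (st b) (st a)) \<and>
   (\<forall>a\<in>S. st (st a) = a) \<and>
   (\<forall>a\<in>S. nrm (st a) = nrm a)"

end

theory Submission
  imports Defs "HOL-Computational_Algebra.Formal_Power_Series"
begin

text \<open>
  Call \<open>z\<close> admissible at \<open>g\<close> if \<open>z \<in> A \<alpha>\<^sub>g(1)\<close> for \<open>g \<ge> 0\<close> and \<open>z \<in> \<alpha>\<^sub>-\<^sub>g(1) A\<close> for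
  \<open>g \<le> 0\<close>. The product of \<open>l1(\<Gamma>, \<alpha>, A)\<close> is the convolution \<open>(a \<cdot> b)\<^sub>g = \<Sum>\<^sub>i a\<^sub>i \<star> b\<^sub>g\<^sub>-\<^sub>i\<close> of a
  twisted product of \<open>a\<close> at \<open>i\<close> with \<open>b\<close> at \<open>j\<close>, which is \<open>a * \<alpha> i b\<close>, \<open>a * \<alpha> (i + j) b\<close>,
  \<open>\<alpha> (- (i + j)) a * b\<close>, \<open>\<alpha> (- j) a * b\<close> or \<open>L (min (- i) j) (a * b)\<close> according to the signs
  of \<open>i\<close>, \<open>j\<close> and \<open>i + j\<close>. On admissible elements this product is admissible at \<open>i + j\<close>,
  contractive, reversed by the involution and associative. Associativity is a case analysis on
  the signs of \<open>i\<close>, \<open>j\<close>, \<open>k\<close> and their partial sums, and the involution reduces the cases with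
  two negative indices to those with two nonnegative ones. Contractivity rests on two facts
  about C*-algebras: *-endomorphisms are contractive, and \<open>L x\<close>, which commutes with the
  involution because it is positive, is a *-homomorphism on the corner \<open>\<alpha> x 1 * A * \<alpha> x 1\<close>
  and hence contractive there. The axioms of a unital Banach *-algebra then follow from
  Fubini's theorem for absolutely summable families.
\<close>

section \<open>Square roots in Banach algebras\<close>

text \<open>The coefficients of the binomial series of \<open>(1 - x) powr (1/2)\<close>.\<close>

definition sqrt_coeff :: "nat \<Rightarrow> real" where
  "sqrt_coeff n = (-1) ^ n * ((1/2) gchoose n)"

lemma abs_sqrt_coeff_le_1: "\<bar>sqrt_coeff n\<bar> \<le> 1"
proof -
  have "\<bar>(1/2::real) gchoose n\<bar> \<le> 1"
  proof (induction n)
    case 0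
    then show ?case by simp
  next
    case (Suc n)
    have "of_nat (Suc n) * ((1/2::real) gchoose Suc n) = (1/2 - of_nat n) * ((1/2) gchoose n)"
      using gbinomial_absorption[of n "1/2::real"] gbinomial_absorb_comp[of "1/2::real" n] by simp
    then have "(1/2::real) gchoose Suc n = ((1/2) gchoose n) * ((1/2 - of_nat n) / of_nat (Suc n))"
      by (simp add: field_simps del: of_nat_Suc)
    moreover have "\<bar>(1/2 - of_nat n) / of_nat (Suc n)\<bar> \<le> (1::real)"
      by (auto simp: abs_if field_simps)
    ultimately show ?case
      using Suc by (metis abs_ge_zero abs_mult mult_le_one)
  qed
  then show ?thesis
    by (simp add: sqrt_coeff_def abs_mult)
qed

lemma sqrt_coeff_convolution:
  "(\<Sum>i\<le>n. sqrt_coeff i * sqrt_coeff (n - i)) = (if n = 0 then 1 else if n = 1 then -1 else 0)"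
proof -
  have "(\<Sum>i\<le>n. sqrt_coeff i * sqrt_coeff (n - i))
      = (-1) ^ n * (\<Sum>i\<le>n. ((1/2::real) gchoose i) * ((1/2) gchoose (n - i)))"
    unfolding sum_distrib_left sqrt_coeff_def
    by (intro sum.cong refl) (auto simp: power_add[symmetric])
  also have "(\<Sum>i\<le>n. ((1/2::real) gchoose i) * ((1/2) gchoose (n - i))) = (1::real) gchoose n"
    using gbinomial_Vandermonde[of "1/2::real" "1/2" n] by (simp add: atMost_atLeast0)
  also have "(1::real) gchoose n = of_nat (1 choose n)"
    using binomial_gbinomial[of 1 n] by (metis of_nat_1)
  finally show ?thesis
    by (cases n; cases "n - 1") (auto simp: binomial_eq_0)
qed

definition sqrt_one_minus :: "'a::{real_normed_algebra_1,banach} \<Rightarrow> 'a" where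
  "sqrt_one_minus k = (\<Sum>n. sqrt_coeff n *\<^sub>R k ^ n)"

lemma summable_norm_sqrt_series:
  fixes k :: "'a::{real_normed_algebra_1,banach}"
  assumes "norm k < 1"
  shows "summable (\<lambda>n. norm (sqrt_coeff n *\<^sub>R k ^ n))"
proof (rule summable_comparison_test')
  show "norm (norm (sqrt_coeff n *\<^sub>R k ^ n)) \<le> norm k ^ n" for n
  proof -
    have "norm (sqrt_coeff n *\<^sub>R k ^ n) \<le> 1 * norm k ^ n"
      unfolding norm_scaleR by (intro mult_mono abs_sqrt_coeff_le_1 norm_power_ineq) auto
    then show ?thesis by simp
  qed
qed (use assms in \<open>auto intro!: summable_geometric\<close>)

lemma summable_sqrt_series:
  fixes k :: "'a::{real_normed_algebra_1,banach}"
  shows "norm k < 1 \<Longrightarrow> summable (\<lambda>n. sqrt_coeff n *\<^sub>R k ^ n)"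
  by (rule summable_norm_cancel[OF summable_norm_sqrt_series])

lemma sqrt_one_minus_square:
  fixes k :: "'a::{real_normed_algebra_1,banach}"
  assumes k: "norm k < 1"
  shows "sqrt_one_minus k * sqrt_one_minus k = 1 - k"
proof -
  have coeff: "(\<Sum>i\<le>n. (sqrt_coeff i *\<^sub>R k ^ i) * (sqrt_coeff (n - i) *\<^sub>R k ^ (n - i)))
      = (if n = 0 then 1 else if n = 1 then -1 else 0) *\<^sub>R k ^ n" for n
  proof -
    have "(\<Sum>i\<le>n. (sqrt_coeff i *\<^sub>R k ^ i) * (sqrt_coeff (n - i) *\<^sub>R k ^ (n - i)))
        = (\<Sum>i\<le>n. (sqrt_coeff i * sqrt_coeff (n - i)) *\<^sub>R k ^ n)"
      by (intro sum.cong refl) (simp add: power_add[symmetric])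
    then show ?thesis
      by (simp add: scaleR_sum_left[symmetric] sqrt_coeff_convolution)
  qed
  have "sqrt_one_minus k * sqrt_one_minus k
      = (\<Sum>n. \<Sum>i\<le>n. (sqrt_coeff i *\<^sub>R k ^ i) * (sqrt_coeff (n - i) *\<^sub>R k ^ (n - i)))"
    unfolding sqrt_one_minus_def
    by (rule Cauchy_product[OF summable_norm_sqrt_series[OF k] summable_norm_sqrt_series[OF k]])
  also have "\<dots> = (\<Sum>n\<in>{0,1}. (if n = 0 then 1 else if n = 1 then -1 else 0) *\<^sub>R k ^ n)"
    unfolding coeff by (rule suminf_finite) auto
  also have "\<dots> = 1 - k"
    by simp
  finally show ?thesis .
qed

lemma sqrt_one_minus_commute:
  fixes k :: "'a::{real_normed_algebra_1,banach}"
  assumes k: "norm k < 1" and hk: "h * k = k * h"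
  shows "h * sqrt_one_minus k = sqrt_one_minus k * h"
proof -
  have "h * sqrt_one_minus k = (\<Sum>n. h * (sqrt_coeff n *\<^sub>R k ^ n))"
    unfolding sqrt_one_minus_def by (rule suminf_mult[OF summable_sqrt_series[OF k], symmetric])
  also have "\<dots> = (\<Sum>n. (sqrt_coeff n *\<^sub>R k ^ n) * h)"
    using power_commuting_commutes[OF hk[symmetric]] by simp
  also have "\<dots> = sqrt_one_minus k * h"
    unfolding sqrt_one_minus_def by (rule suminf_mult2[OF summable_sqrt_series[OF k], symmetric])
  finally show ?thesis .
qed

section \<open>C*-algebras\<close>

lemma continuous_linear_imp_bounded_linear:
  fixes T :: "'a::real_normed_vector \<Rightarrow> 'b::real_normed_vector"
  assumes lin: "linear T" and cont: "continuous_on UNIV T"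
  shows "bounded_linear T"
proof -
  have "isCont T 0"
    using cont by (simp add: continuous_on_eq_continuous_at)
  then obtain d where d: "d > 0" and small: "\<And>y. norm y < d \<Longrightarrow> norm (T y) < 1"
    unfolding continuous_at_eps_delta using linear_0[OF lin]
    by (auto simp: dist_norm) (metis zero_less_one)
  have "norm (T y) \<le> norm y * (2 / d)" for y
  proof (cases "y = 0")
    case True
    then show ?thesis by (simp add: linear_0[OF lin])
  next
    case False
    let ?t = "d / (2 * norm y)"
    have t: "?t > 0"
      using False d by simp
    have "norm (?t *\<^sub>R y) < d"
      using False d by simp
    then have "norm (T (?t *\<^sub>R y)) < 1"
      by (rule small)
    then have "?t * norm (T y) < 1"
      using t d by (simp add: linear_scale[OF lin])
    then show ?thesis
      using False d by (simp add: field_simps)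
  qed
  then show ?thesis
    using lin unfolding bounded_linear_def bounded_linear_axioms_def by blast
qed

locale cstar =
  fixes sc :: "complex \<Rightarrow> 'a::{real_normed_algebra_1,banach} \<Rightarrow> 'a"
    and st :: "'a \<Rightarrow> 'a"
  assumes cstar_algebra: "cstar_algebra sc st"
begin

lemma sc_of_real: "sc (complex_of_real r) a = r *\<^sub>R a"
  and sc_add_scalar: "sc (c + d) a = sc c a + sc d a"
  and sc_add: "sc c (a + b) = sc c a + sc c b"
  and sc_sc: "sc (c * d) a = sc c (sc d a)"
  and norm_sc: "norm (sc c a) = cmod c * norm a"
  using cstar_algebra unfolding cstar_algebra_def complex_scaling_def by simp_all

lemma sc_mult_left: "sc c (a * b) = sc c a * b"
  and sc_mult_right: "sc c (a * b) = a * sc c b"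
  using cstar_algebra unfolding cstar_algebra_def complex_scaling_def by blast+

lemma st_add: "st (a + b) = st a + st b"
  and st_sc: "st (sc c a) = sc (cnj c) (st a)"
  and st_mult: "st (a * b) = st b * st a"
  and st_st [simp]: "st (st a) = a"
  and norm_st_mult_self: "norm (st a * a) = (norm a)\<^sup>2"
  using cstar_algebra unfolding cstar_algebra_def by simp_all

lemma sc_one [simp]: "sc 1 a = a"
  using sc_of_real[of 1 a] by simp

lemma sc_minus_one: "sc (-1) a = - a"
  using sc_of_real[of "-1" a] by simp

lemma sc_minus_ii: "sc (- \<i>) a = - sc \<i> a"
  using sc_sc[of "-1" \<i> a] by (simp add: sc_minus_one)

lemma sc_ii_minus_ii: "sc \<i> (sc (- \<i>) a) = a"
  using sc_sc[of \<i> "- \<i>" a] by simp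

lemma sc_scaleR: "sc c (r *\<^sub>R a) = r *\<^sub>R sc c a"
  by (metis sc_of_real sc_sc mult.commute)

lemma bounded_linear_sc: "bounded_linear (sc c)"
  by (rule bounded_linear_intro[where K="cmod c"]) (auto simp: sc_add sc_scaleR norm_sc mult.commute)

lemma st_scaleR: "st (r *\<^sub>R a) = r *\<^sub>R st a"
  using st_sc[of "complex_of_real r" a] by (simp add: sc_of_real)

lemma linear_st: "linear st"
  by (rule linearI) (simp_all add: st_add st_scaleR)

lemma st_one [simp]: "st 1 = 1"
  using st_mult[of "st 1" 1] by simp

lemma st_power: "st (a ^ n) = st a ^ n"
  by (induction n) (auto simp: st_mult power_commutes)

lemma norm_st [simp]: "norm (st a) = norm a"
proof -
  have le: "norm b \<le> norm (st b)" for b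
  proof (cases "b = 0")
    case False
    have "(norm b)\<^sup>2 \<le> norm (st b) * norm b"
      using norm_st_mult_self[of b] norm_mult_ineq[of "st b" b] by simp
    then show ?thesis
      using False by (simp add: power2_eq_square)
  qed (simp add: linear_0[OF linear_st])
  show ?thesis
    using le[of a] le[of "st a"] by simp
qed

lemma bounded_linear_st: "bounded_linear st"
  by (rule bounded_linear_intro[where K=1]) (simp_all add: st_add st_scaleR)

lemma norm_self_adjoint_square: "st h = h \<Longrightarrow> norm (h * h) = (norm h)\<^sup>2"
  using norm_st_mult_self[of h] by simp

lemma norm_projection_le_1: "st p = p \<Longrightarrow> p * p = p \<Longrightarrow> norm p \<le> 1"
  using norm_self_adjoint_square[of p] by (cases "p = 0") (auto simp: power2_eq_square)

lemma st_sqrt_one_minus: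
  assumes "norm k < 1" and "st k = k"
  shows "st (sqrt_one_minus k) = sqrt_one_minus k"
  unfolding sqrt_one_minus_def
  using bounded_linear.suminf[OF bounded_linear_st summable_sqrt_series[OF assms(1)]]
  by (simp add: st_scaleR st_power assms(2))

lemma projection_corner_sqrt:
  assumes p: "st p = p" "p * p = p"
    and h: "p * h = h" "h * p = h" "st h = h" "norm h < 1"
  obtains s where "p * s = s" "s * p = s" "st s = s" "h * s = s * h" "h * h + s * s = p"
proof -
  have k: "norm (h * h) < 1"
    using norm_self_adjoint_square[OF h(3)] h(4) by (simp add: power_less_one_iff)
  define s where "s = sqrt_one_minus (h * h)"
  have s: "st s = s"
    unfolding s_def using k by (rule st_sqrt_one_minus) (simp add: st_mult h(3))
  have hs: "h * s = s * h" and ps: "p * s = s * p"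
    unfolding s_def using k by (rule sqrt_one_minus_commute; metis h(1,2) mult.assoc)+
  have ph: "p * (h * x) = h * x" for x
    by (metis h(1) mult.assoc)
  have "p * s * p * (p * s * p) = p * (s * s) * p"
    by (metis ps p(2) mult.assoc)
  also have "\<dots> = p - h * h"
    unfolding s_def sqrt_one_minus_square[OF k] by (simp add: algebra_simps p(2) ph h(2))
  finally have sum: "h * h + p * s * p * (p * s * p) = p"
    by simp
  show ?thesis
  proof (rule that[of "p * s * p"])
    show "p * (p * s * p) = p * s * p" "p * s * p * p = p * s * p"
      by (metis p(2) mult.assoc)+
    show "st (p * s * p) = p * s * p"
      by (simp add: st_mult p(1) s mult.assoc)
    show "h * (p * s * p) = p * s * p * h"
      by (metis hs ps h(1,2) mult.assoc)
  qed (fact sum)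
qed

text \<open>With \<open>w = A + \<i> S\<close> one gets \<open>w\<^sup>* w = A\<^sup>2 + S\<^sup>2\<close> and \<open>2 A = w + w\<^sup>*\<close>.\<close>

lemma norm_le_1_if_sum_squares_le_1:
  assumes A: "st A = A" and S: "st S = S" and AS: "A * S = S * A"
    and sum: "norm (A * A + S * S) \<le> 1"
  shows "norm A \<le> 1"
proof -
  define w where "w = A + sc \<i> S"
  have st_w: "st w = A + sc (- \<i>) S"
    unfolding w_def by (simp add: st_add st_sc A S)
  have "st w * w = A * A + sc \<i> (A * S) + sc (- \<i>) (S * A) + S * S"
    unfolding st_w
    by (simp add: w_def distrib_left distrib_right sc_mult_left[symmetric] sc_mult_right[symmetric]
        add.assoc sc_add sc_ii_minus_ii)
  also have "\<dots> = A * A + S * S"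
    using AS by (simp add: sc_minus_ii)
  finally have "(norm w)\<^sup>2 \<le> 1"
    using norm_st_mult_self[of w] sum by simp
  then have "norm w \<le> 1"
    by (simp add: power_le_one_iff)
  have "2 *\<^sub>R A = w + st w"
    unfolding st_w by (simp add: w_def sc_minus_ii scaleR_2)
  then have "2 * norm A \<le> norm w + norm (st w)"
    by (metis norm_scaleR norm_triangle_ineq abs_numeral)
  then show ?thesis
    using \<open>norm w \<le> 1\<close> by simp
qed

text \<open>By homogeneity \<open>F\<close> is contractive on the self-adjoint elements of \<open>C\<close>; the C*-identity
  \<open>\<parallel>a\<^sup>* a\<parallel> = \<parallel>a\<parallel>\<^sup>2\<close> extends this to all of \<open>C\<close>.\<close>

lemma norm_le_if_self_adjoint_unit_ball:
  assumes lin: "linear F"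
    and C_scaleR: "\<And>r a. C a \<Longrightarrow> C (r *\<^sub>R a)"
    and C_st_mult: "\<And>a. C a \<Longrightarrow> C (st a * a)"
    and F_st_mult: "\<And>a. C a \<Longrightarrow> F (st a * a) = st (F a) * F a"
    and unit_ball: "\<And>h. C h \<Longrightarrow> st h = h \<Longrightarrow> norm h < 1 \<Longrightarrow> norm (F h) \<le> 1"
    and "C a"
  shows "norm (F a) \<le> norm a"
proof -
  have self_adjoint: "norm (F h) \<le> norm h" if h: "C h" "st h = h" for h
  proof (rule dense_ge)
    fix t assume t: "norm h < t"
    then have t0: "0 < t"
      using norm_ge_zero[of h] by linarith
    have "norm (F ((1/t) *\<^sub>R h)) \<le> 1"
      by (rule unit_ball) (use h t t0 C_scaleR in \<open>auto simp: st_scaleR field_simps\<close>)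
    then show "norm (F h) \<le> t"
      using t0 by (simp add: linear_scale[OF lin] field_simps)
  qed
  have "(norm (F a))\<^sup>2 = norm (F (st a * a))"
    using norm_st_mult_self[of "F a"] F_st_mult[OF \<open>C a\<close>] by simp
  also have "\<dots> \<le> norm (st a * a)"
    by (rule self_adjoint) (simp_all add: C_st_mult \<open>C a\<close> st_mult)
  also have "\<dots> = (norm a)\<^sup>2"
    by (rule norm_st_mult_self)
  finally show ?thesis
    by (rule power2_le_imp_le) simp
qed

lemma star_endomorphism_linear:
  "star_endomorphism sc st f \<Longrightarrow> linear f"
  unfolding star_endomorphism_def complex_linear_def
  by (intro linearI) (simp_all add: sc_of_real[symmetric])

lemma norm_star_endomorphism_le:
  assumes f: "star_endomorphism sc st f"
  shows "norm (f a) \<le> norm a"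
proof (rule norm_le_if_self_adjoint_unit_ball[where C="\<lambda>_. True"])
  have mult: "f (a * b) = f a * f b" and star: "f (st a) = st (f a)" for a b
    using f unfolding star_endomorphism_def by simp_all
  show "linear f"
    by (rule star_endomorphism_linear[OF f])
  show "f (st a * a) = st (f a) * f a" for a
    by (simp add: mult star)
  show "norm (f h) \<le> 1" if h: "st h = h" "norm h < 1" for h
  proof -
    obtain s where s: "st s = s" "h * s = s * h" "h * h + s * s = 1"
      using projection_corner_sqrt[of 1 h] h by auto
    show ?thesis
    proof (rule norm_le_1_if_sum_squares_le_1)
      show "st (f h) = f h" "st (f s) = f s" "f h * f s = f s * f h"
        by (simp_all add: star[symmetric] mult[symmetric] h s)
      have "f h * f h + f s * f s = f 1"
        using s(3) by (simp add: mult[symmetric] linear_add[OF star_endomorphism_linear[OF f], symmetric])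
      moreover have "norm (f 1) \<le> 1"
        by (rule norm_projection_le_1) (simp_all add: star[symmetric] mult[symmetric])
      ultimately show "norm (f h * f h + f s * f s) \<le> 1"
        by simp
    qed
  qed
qed simp_all

lemma positive_el_self_adjoint: "positive_el st a \<Longrightarrow> st a = a"
  unfolding positive_el_def by (auto simp: st_mult)

lemma positive_one_plus:
  assumes "st h = h" and "norm h < 1"
  shows "positive_el st (1 + h)"
proof -
  have k: "norm (- h) < 1"
    using assms(2) by simp
  have "1 + h = st (sqrt_one_minus (- h)) * sqrt_one_minus (- h)"
    by (simp add: st_sqrt_one_minus[OF k] sqrt_one_minus_square[OF k] linear_neg[OF linear_st] assms(1))
  then show ?thesis
    unfolding positive_el_def by blast
qed

lemma complex_linear_linear: "complex_linear sc T \<Longrightarrow> linear T"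
  unfolding complex_linear_def by (intro linearI) (simp_all add: sc_of_real[symmetric])

lemma cartesian_decomposition:
  obtains h1 h2 where "st h1 = h1" "st h2 = h2" "a = h1 + sc \<i> h2"
proof
  show "st ((1/2) *\<^sub>R (a + st a)) = (1/2) *\<^sub>R (a + st a)"
    by (simp add: st_scaleR st_add add.commute)
  show "st (sc (- \<i>) ((1/2) *\<^sub>R (a - st a))) = sc (- \<i>) ((1/2) *\<^sub>R (a - st a))"
    by (simp add: st_sc st_scaleR linear_diff[OF linear_st] sc_minus_ii sc_scaleR
        linear_diff[OF bounded_linear.linear[OF bounded_linear_sc]] algebra_simps)
  show "a = (1/2) *\<^sub>R (a + st a) + sc \<i> (sc (- \<i>) ((1/2) *\<^sub>R (a - st a)))"
    unfolding sc_ii_minus_ii by (simp add: algebra_simps scaleR_2[symmetric])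
qed

text \<open>After scaling to \<open>norm h < 1\<close>, \<open>2 h = (1 + h) - (1 - h)\<close> is a difference of positive elements.\<close>

lemma positive_map_self_adjoint:
  assumes lin: "complex_linear sc T" and pos: "\<And>a. positive_el st a \<Longrightarrow> positive_el st (T a)"
    and h: "st h = h"
  shows "st (T h) = T h"
proof -
  have rlin: "linear T"
    by (rule complex_linear_linear[OF lin])
  define t where "t = norm h + 1"
  have t: "t > 0"
    unfolding t_def using norm_ge_zero[of h] by linarith
  define h' where "h' = (1/t) *\<^sub>R h"
  have h': "st h' = h'" "norm h' < 1" "st (- h') = - h'"
    using t unfolding h'_def t_def by (simp_all add: st_scaleR h linear_neg[OF linear_st] field_simps)
  have T_pm: "st (T (1 + h')) = T (1 + h')" "st (T (1 + - h')) = T (1 + - h')"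
    by (rule positive_el_self_adjoint[OF pos[OF positive_one_plus]]; use h' in simp)+
  have "2 *\<^sub>R T h' = T (1 + h') - T (1 + - h')"
    by (simp only: linear_add[OF rlin] linear_neg[OF rlin]) (simp add: scaleR_2)
  then have "st (2 *\<^sub>R T h') = 2 *\<^sub>R T h'"
    by (simp only: linear_diff[OF linear_st] T_pm)
  moreover have "T h = t *\<^sub>R T h'"
    using t by (simp add: h'_def linear_scale[OF rlin])
  ultimately show ?thesis
    by (simp add: st_scaleR)
qed

lemma positive_map_st:
  assumes lin: "complex_linear sc T" and pos: "\<And>a. positive_el st a \<Longrightarrow> positive_el st (T a)"
  shows "T (st a) = st (T a)"
proof -
  obtain h1 h2 where h: "st h1 = h1" "st h2 = h2" and a: "a = h1 + sc \<i> h2"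
    by (rule cartesian_decomposition)
  have T: "T (x + sc c y) = T x + sc c (T y)" for x y c
    using lin unfolding complex_linear_def by simp
  have "T (st a) = T (h1 + sc (- \<i>) h2)"
    unfolding a by (simp add: st_add st_sc h)
  also have "\<dots> = st (T (h1 + sc \<i> h2))"
    by (simp add: T st_add st_sc positive_map_self_adjoint[OF lin pos] h)
  finally show ?thesis
    unfolding a .
qed

end

section \<open>Transfer operators\<close>

locale transfer_step = cstar +
  fixes E T :: "'a::{real_normed_algebra_1,banach} \<Rightarrow> 'a"
  assumes E_star_endomorphism: "star_endomorphism sc st E"
    and T_continuous: "continuous_on UNIV T"
    and T_complex_linear: "complex_linear sc T"
    and T_positive: "\<And>a. positive_el st a \<Longrightarrow> positive_el st (T a)"
    and T_E_mult: "T (E a * b) = a * T b"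
    and E_T: "E (T a) = E 1 * a * E 1"
begin

lemma E_mult: "E (a * b) = E a * E b"
  and E_st: "E (st a) = st (E a)"
  using E_star_endomorphism unfolding star_endomorphism_def by simp_all

lemma linear_E: "linear E"
  by (rule star_endomorphism_linear[OF E_star_endomorphism])

lemma norm_E_le: "norm (E a) \<le> norm a"
  by (rule norm_star_endomorphism_le[OF E_star_endomorphism])

lemma bounded_linear_E: "bounded_linear E"
  by (rule bounded_linear_intro[where K=1])
     (simp_all add: linear_add[OF linear_E] linear_scale[OF linear_E] norm_E_le)

lemma E_sc: "E (sc c a) = sc c (E a)"
  using E_star_endomorphism unfolding star_endomorphism_def complex_linear_def by simp

lemma E_one_idem: "E 1 * E 1 = E 1"
  using E_mult[of 1 1] by simp

lemma st_E_one: "st (E 1) = E 1"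
  using E_st[of 1] by simp

lemma linear_T: "linear T"
  by (rule complex_linear_linear[OF T_complex_linear])

lemma bounded_linear_T: "bounded_linear T"
  by (rule continuous_linear_imp_bounded_linear[OF linear_T T_continuous])

lemma T_sc: "T (sc c a) = sc c (T a)"
  using T_complex_linear unfolding complex_linear_def by simp

lemma T_st: "T (st a) = st (T a)"
  by (rule positive_map_st[OF T_complex_linear T_positive])

lemma T_mult_E: "T (a * E b) = T a * b"
proof -
  have "T (a * E b) = st (T (E (st b) * st a))"
    by (metis T_st st_st st_mult E_st)
  also have "\<dots> = T a * b"
    by (simp add: T_E_mult st_mult T_st)
  finally show ?thesis .
qed

lemma T_E_one: "T (E 1) = T 1"
  using T_E_mult[of 1 1] by simp

lemma T_mult_corner: "E 1 * e * E 1 = e \<Longrightarrow> T (e * a) = T e * T a"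
  using T_E_mult[of "T e" a] by (simp add: E_T)

lemma norm_T_one_le_1: "norm (T 1) \<le> 1"
proof (rule norm_projection_le_1)
  show "st (T 1) = T 1"
    by (simp add: T_st[symmetric])
  show "T 1 * T 1 = T 1"
    using T_mult_corner[of "E 1" 1] by (simp add: E_one_idem T_E_one)
qed

text \<open>On the corner \<open>p A p\<close>, \<open>p = E 1\<close>, the map \<open>T\<close> is a *-homomorphism with \<open>T p\<close> a
  projection, so the argument for *-endomorphisms applies inside the corner.\<close>

lemma norm_T_le:
  assumes "E 1 * e = e" and "e * E 1 = e"
  shows "norm (T e) \<le> norm e"
proof (rule norm_le_if_self_adjoint_unit_ball[where C="\<lambda>e. E 1 * e = e \<and> e * E 1 = e"])
  let ?p = "E 1"
  have corner_mult: "T (e * a) = T e * T a" if "?p * e = e" "e * ?p = e" for e a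
    by (rule T_mult_corner) (simp add: that)
  show "linear T"
    by (rule linear_T)
  show "?p * (r *\<^sub>R a) = r *\<^sub>R a \<and> r *\<^sub>R a * ?p = r *\<^sub>R a" if "?p * a = a \<and> a * ?p = a" for r a
    using that by (metis mult_scaleR_left mult_scaleR_right)
  show "?p * (st a * a) = st a * a \<and> st a * a * ?p = st a * a" if "?p * a = a \<and> a * ?p = a" for a
    using that st_mult[of a ?p] st_E_one by (metis mult.assoc)
  show "T (st a * a) = st (T a) * T a" if "?p * a = a \<and> a * ?p = a" for a
    using that st_mult[of a ?p] st_mult[of ?p a] st_E_one by (simp add: corner_mult T_st)
  show "norm (T h) \<le> 1" if h: "?p * h = h \<and> h * ?p = h" "st h = h" "norm h < 1" for h
  proof -
    obtain s where s: "?p * s = s" "s * ?p = s" "st s = s" "h * s = s * h" "h * h + s * s = ?p"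
      using projection_corner_sqrt[OF st_E_one E_one_idem, of h] h by auto
    show ?thesis
    proof (rule norm_le_1_if_sum_squares_le_1)
      show "st (T h) = T h" "st (T s) = T s" "T h * T s = T s * T h"
        using h s by (simp_all add: T_st[symmetric] corner_mult[symmetric])
      have "T h * T h + T s * T s = T (h * h + s * s)"
        using h(1) s(1,2) by (simp add: corner_mult linear_add[OF linear_T])
      also have "\<dots> = T 1"
        by (simp add: s(5) T_E_one)
      finally show "norm (T h * T h + T s * T s) \<le> 1"
        using norm_T_one_le_1 by simp
    qed
  qed
qed (use assms in simp)

end

section \<open>Absolutely summable families\<close>

lemma infsum_bounded_linear:
  assumes "bounded_linear h" and "f summable_on A"
  shows "(\<Sum>\<^sub>\<infinity>x\<in>A. h (f x)) = h (infsum f A)"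
  using has_sum_bounded_linear[OF assms(1) has_sum_infsum[OF assms(2)]] by (simp add: infsumI)

lemma
  fixes u v :: "'b \<Rightarrow> real"
  assumes u: "u summable_on UNIV" and v: "v summable_on UNIV"
    and u0: "\<And>x. 0 \<le> u x" and v0: "\<And>x. 0 \<le> v x"
  shows summable_on_mult_product: "(\<lambda>(x, y). u x * v y) summable_on UNIV"
    and infsum_mult_product: "(\<Sum>\<^sub>\<infinity>(x, y). u x * v y) = infsum u UNIV * infsum v UNIV"
proof -
  have row: "((\<lambda>y. u x * v y) has_sum u x * infsum v UNIV) UNIV" for x
    by (rule has_sum_cmult_right) (use v in simp)
  have "(\<lambda>p. u (fst p) * v (snd p)) summable_on Sigma UNIV (\<lambda>_. UNIV)"
    by (rule summable_on_SigmaI[where g="\<lambda>x. u x * infsum v UNIV"])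
       (use row summable_on_cmult_left[OF u] u0 v0 in auto)
  then show summable: "(\<lambda>(x, y). u x * v y) summable_on UNIV"
    by (simp add: case_prod_unfold)
  have "(\<Sum>\<^sub>\<infinity>(x, y). u x * v y) = (\<Sum>\<^sub>\<infinity>x. \<Sum>\<^sub>\<infinity>y. u x * v y)"
    using infsum_Sigma'_banach[of "\<lambda>x y. u x * v y" UNIV "\<lambda>_. UNIV"] summable by simp
  also have "\<dots> = (\<Sum>\<^sub>\<infinity>x. u x * infsum v UNIV)"
    by (rule infsum_cong) (rule infsumI[OF row])
  also have "\<dots> = infsum u UNIV * infsum v UNIV"
    by (rule infsum_cmult_left')
  finally show "(\<Sum>\<^sub>\<infinity>(x, y). u x * v y) = infsum u UNIV * infsum v UNIV" .
qed

lemma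
  fixes u v :: "'g::ab_group_add \<Rightarrow> real"
  assumes "u summable_on UNIV" and "v summable_on UNIV" and "\<And>x. 0 \<le> u x" and "\<And>x. 0 \<le> v x"
  shows summable_on_convolution: "(\<lambda>(g, i). u i * v (g - i)) summable_on UNIV"
    and infsum_convolution: "(\<Sum>\<^sub>\<infinity>(g, i). u i * v (g - i)) = infsum u UNIV * infsum v UNIV"
proof -
  have "(\<lambda>(g, i). u i * v (g - i)) summable_on UNIV \<longleftrightarrow> (\<lambda>(x, y). u x * v y) summable_on UNIV"
    by (rule summable_on_reindex_bij_witness[where j="\<lambda>(g, i). (i, g - i)" and i="\<lambda>(i, j). (i + j, i)"])
       auto
  then show "(\<lambda>(g, i). u i * v (g - i)) summable_on UNIV"
    using summable_on_mult_product[OF assms] by blast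
  have "(\<Sum>\<^sub>\<infinity>(g, i). u i * v (g - i)) = (\<Sum>\<^sub>\<infinity>(x, y). u x * v y)"
    by (rule infsum_reindex_bij_witness[where j="\<lambda>(g, i). (i, g - i)" and i="\<lambda>(i, j). (i + j, i)"])
       auto
  then show "(\<Sum>\<^sub>\<infinity>(g, i). u i * v (g - i)) = infsum u UNIV * infsum v UNIV"
    using infsum_mult_product[OF assms] by simp
qed

lemma infsum_Un3:
  fixes f :: "'a \<Rightarrow> 'b::{topological_comm_monoid_add, t2_space}"
  assumes "f summable_on A" "f summable_on B" "f summable_on C"
    and "A \<inter> B = {}" "A \<inter> C = {}" "B \<inter> C = {}"
  shows "infsum f (A \<union> B \<union> C) = infsum f A + infsum f B + infsum f C"
  using assms by (simp add: infsum_Un_disjoint summable_on_Un_disjoint Int_Un_distrib2)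

lemma l1_cauchy_pointwise_limit:
  fixes f :: "nat \<Rightarrow> 'i \<Rightarrow> 'a::banach"
  assumes summable: "\<And>m n. (\<lambda>i. norm (f m i - f n i)) summable_on UNIV"
    and cauchy: "\<And>e. 0 < e \<Longrightarrow> \<exists>N. \<forall>m\<ge>N. \<forall>n\<ge>N. (\<Sum>\<^sub>\<infinity>i. norm (f m i - f n i)) < e"
  obtains l where "\<And>i. (\<lambda>n. f n i) \<longlonglongrightarrow> l i"
    and "\<And>e. 0 < e \<Longrightarrow> \<exists>N. \<forall>n\<ge>N. (\<lambda>i. norm (l i - f n i)) summable_on UNIV
                                  \<and> (\<Sum>\<^sub>\<infinity>i. norm (l i - f n i)) \<le> e"
proof
  have finite_le: "(\<Sum>i\<in>F. norm (f m i - f n i)) \<le> (\<Sum>\<^sub>\<infinity>i. norm (f m i - f n i))"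
    if "finite F" for F m n
    by (rule finite_sum_le_infsum[OF summable that]) simp_all
  have Cauchy: "Cauchy (\<lambda>n. f n i)" for i
  proof (rule CauchyI)
    fix e :: real assume "0 < e"
    then obtain N where "\<forall>m\<ge>N. \<forall>n\<ge>N. (\<Sum>\<^sub>\<infinity>i. norm (f m i - f n i)) < e"
      using cauchy by blast
    moreover have "norm (f m i - f n i) \<le> (\<Sum>\<^sub>\<infinity>i. norm (f m i - f n i))" for m n
      using finite_le[of "{i}" m n] by simp
    ultimately show "\<exists>M. \<forall>m\<ge>M. \<forall>n\<ge>M. norm (f m i - f n i) < e"
      by (meson le_less_trans)
  qed
  show lim: "(\<lambda>n. f n i) \<longlonglongrightarrow> lim (\<lambda>n. f n i)" for i
    using Cauchy_convergent[OF Cauchy] convergent_LIMSEQ_iff by blast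
  fix e :: real assume "0 < e"
  then obtain N where N: "\<forall>m\<ge>N. \<forall>n\<ge>N. (\<Sum>\<^sub>\<infinity>i. norm (f m i - f n i)) < e"
    using cauchy by blast
  have finite_tail: "(\<Sum>i\<in>F. norm (lim (\<lambda>n. f n i) - f n i)) \<le> e" if "finite F" "N \<le> n" for F n
  proof (rule LIMSEQ_le_const2)
    show "(\<lambda>m. \<Sum>i\<in>F. norm (f m i - f n i)) \<longlonglongrightarrow> (\<Sum>i\<in>F. norm (lim (\<lambda>n. f n i) - f n i))"
      by (intro tendsto_sum tendsto_norm tendsto_diff lim tendsto_const)
    show "\<exists>M. \<forall>m\<ge>M. (\<Sum>i\<in>F. norm (f m i - f n i)) \<le> e"
      using N finite_le[OF that(1)] that(2) by (meson less_imp_le order_trans)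
  qed
  show "\<exists>N. \<forall>n\<ge>N. (\<lambda>i. norm (lim (\<lambda>n. f n i) - f n i)) summable_on UNIV
      \<and> (\<Sum>\<^sub>\<infinity>i. norm (lim (\<lambda>n. f n i) - f n i)) \<le> e"
  proof (intro exI allI impI conjI)
    fix n assume "N \<le> n"
    then show summable: "(\<lambda>i. norm (lim (\<lambda>n. f n i) - f n i)) summable_on UNIV"
      by (intro nonneg_bdd_above_summable_on bdd_aboveI) (auto intro: finite_tail)
    show "(\<Sum>\<^sub>\<infinity>i. norm (lim (\<lambda>n. f n i) - f n i)) \<le> e"
      by (rule infsum_le_finite_sums[OF summable]) (use \<open>N \<le> n\<close> finite_tail in auto)
  qed
qed

section \<open>The twisted product\<close>

lemma add_nonneg_iff_neg_le: "0 \<le> i + j \<longleftrightarrow> - i \<le> (j::'g::ordered_ab_group_add)"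
  using add_le_cancel_left[of i "- i" j] by simp

lemma add_nonpos_iff_le_neg: "i + j \<le> 0 \<longleftrightarrow> j \<le> - (i::'g::ordered_ab_group_add)"
  using add_le_cancel_left[of i j "- i"] by simp

locale l1_system = cstar sc st
  for sc :: "complex \<Rightarrow> 'a::{real_normed_algebra_1,banach} \<Rightarrow> 'a" and st :: "'a \<Rightarrow> 'a" +
  fixes \<alpha> :: "'g::linordered_ab_group_add \<Rightarrow> 'a \<Rightarrow> 'a"
    and L :: "'g \<Rightarrow> 'a \<Rightarrow> 'a"
  assumes endo_semigroup: "endo_semigroup sc st \<alpha>"
    and transfer_action: "complete_transfer_action sc st \<alpha> L"
begin

lemma transfer_step_at: "0 \<le> x \<Longrightarrow> transfer_step sc st (\<alpha> x) (L x)"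
  using endo_semigroup transfer_action cstar_axioms
  unfolding transfer_step_def transfer_step_axioms_def endo_semigroup_def complete_transfer_action_def
  by simp

lemma alpha_0 [simp]: "\<alpha> 0 a = a"
  using endo_semigroup unfolding endo_semigroup_def by simp

lemma alpha_alpha: "0 \<le> x \<Longrightarrow> 0 \<le> y \<Longrightarrow> \<alpha> x (\<alpha> y a) = \<alpha> (x + y) a"
  using endo_semigroup unfolding endo_semigroup_def by (metis comp_apply)

lemma L_L: "0 \<le> x \<Longrightarrow> 0 \<le> y \<Longrightarrow> L y (L x a) = L (x + y) a"
  using transfer_action unfolding complete_transfer_action_def by (metis comp_apply)

lemma alpha_alpha_eq: "0 \<le> x \<Longrightarrow> 0 \<le> y \<Longrightarrow> x + y = z \<Longrightarrow> \<alpha> x (\<alpha> y a) = \<alpha> z a"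
  using alpha_alpha by blast

lemma L_L_eq: "0 \<le> x \<Longrightarrow> 0 \<le> y \<Longrightarrow> x + y = z \<Longrightarrow> L y (L x a) = L z a"
  using L_L by blast

context
  fixes x :: 'g
  assumes x: "0 \<le> x"
begin

interpretation step: transfer_step sc st "\<alpha> x" "L x"
  by (rule transfer_step_at[OF x])

lemmas alpha_mult = step.E_mult
  and alpha_st = step.E_st
  and alpha_sc = step.E_sc
  and bounded_linear_alpha = step.bounded_linear_E
  and norm_alpha_le = step.norm_E_le
  and alpha_one_idem = step.E_one_idem
  and st_alpha_one = step.st_E_one
  and L_alpha_mult = step.T_E_mult
  and L_mult_alpha = step.T_mult_E
  and alpha_L = step.E_T
  and L_st = step.T_st
  and L_sc = step.T_sc
  and bounded_linear_L = step.bounded_linear_T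
  and norm_L_le = step.norm_T_le

end

lemma L_0 [simp]: "L 0 a = a"
  using alpha_L[of 0 a] by simp

lemma alpha_one_absorb:
  assumes "0 \<le> m" "m \<le> n"
  shows "\<alpha> m 1 * \<alpha> n 1 = \<alpha> n 1" and "\<alpha> n 1 * \<alpha> m 1 = \<alpha> n 1"
proof -
  have n: "\<alpha> n 1 = \<alpha> m (\<alpha> (n - m) 1)"
    using assms alpha_alpha[of m "n - m" 1] by simp
  show "\<alpha> m 1 * \<alpha> n 1 = \<alpha> n 1" "\<alpha> n 1 * \<alpha> m 1 = \<alpha> n 1"
    unfolding n using assms by (simp_all add: alpha_mult[symmetric])
qed

lemma alpha_one_mult_mono: "\<alpha> n 1 * z = z \<Longrightarrow> 0 \<le> m \<Longrightarrow> m \<le> n \<Longrightarrow> \<alpha> m 1 * z = z"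
  by (metis alpha_one_absorb(1) mult.assoc)

lemma mult_alpha_one_mono: "z * \<alpha> n 1 = z \<Longrightarrow> 0 \<le> m \<Longrightarrow> m \<le> n \<Longrightarrow> z * \<alpha> m 1 = z"
  by (metis alpha_one_absorb(2) mult.assoc)

text \<open>As \<open>\<alpha> g 1\<close> is a projection, \<open>z \<in> A \<alpha>\<^sub>g(1)\<close> iff \<open>z * \<alpha> g 1 = z\<close>.\<close>

definition admissible :: "'g \<Rightarrow> 'a \<Rightarrow> bool" where
  "admissible g z \<longleftrightarrow> (0 \<le> g \<longrightarrow> z * \<alpha> g 1 = z) \<and> (g \<le> 0 \<longrightarrow> \<alpha> (- g) 1 * z = z)"

lemma admissible_nonneg: "admissible g z \<Longrightarrow> 0 \<le> g \<Longrightarrow> z * \<alpha> g 1 = z"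
  and admissible_nonpos: "admissible g z \<Longrightarrow> g \<le> 0 \<Longrightarrow> \<alpha> (- g) 1 * z = z"
  unfolding admissible_def by simp_all

lemma admissible_zero: "admissible g 0"
  unfolding admissible_def by simp

lemma admissible_add: "admissible g y \<Longrightarrow> admissible g z \<Longrightarrow> admissible g (y + z)"
  unfolding admissible_def by (simp add: distrib_left distrib_right)

lemma admissible_sc: "admissible g z \<Longrightarrow> admissible g (sc c z)"
  unfolding admissible_def by (simp add: sc_mult_left[symmetric] sc_mult_right[symmetric])

lemma admissible_st: "admissible g z \<Longrightarrow> admissible (- g) (st z)"
  unfolding admissible_def by (metis st_mult st_alpha_one minus_minus neg_0_le_iff_le)

text \<open>\<open>twisted_mult i (g - i) (a i) (b (g - i))\<close> is the summand of \<open>l1_mult \<alpha> L a b g\<close> at \<open>i\<close>.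
  In the names of the lemmas below, \<open>p\<close> and \<open>n\<close> record the signs of the indices \<open>i\<close>, \<open>j\<close>
  (and \<open>k\<close>), and a suffix after the underscore the sign of \<open>i + j\<close>.\<close>

definition twisted_mult :: "'g \<Rightarrow> 'g \<Rightarrow> 'a \<Rightarrow> 'a \<Rightarrow> 'a" where
  "twisted_mult i j a b =
     (if 0 \<le> i \<and> 0 \<le> j then a * \<alpha> i b
      else if i \<le> 0 \<and> j \<le> 0 then \<alpha> (- j) a * b
      else if 0 \<le> i then (if 0 \<le> i + j then a * \<alpha> (i + j) b else \<alpha> (- (i + j)) a * b)
      else L (min (- i) j) (a * b))"

lemma twisted_mult_pp: "0 \<le> i \<Longrightarrow> 0 \<le> j \<Longrightarrow> twisted_mult i j a b = a * \<alpha> i b"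
  unfolding twisted_mult_def by simp

lemma twisted_mult_nn: "i \<le> 0 \<Longrightarrow> j \<le> 0 \<Longrightarrow> twisted_mult i j a b = \<alpha> (- j) a * b"
  unfolding twisted_mult_def by (cases "i = 0"; cases "j = 0") auto

lemma twisted_mult_pn_p:
  "0 \<le> i \<Longrightarrow> j \<le> 0 \<Longrightarrow> 0 \<le> i + j \<Longrightarrow> twisted_mult i j a b = a * \<alpha> (i + j) b"
  unfolding twisted_mult_def by (cases "i = 0"; cases "j = 0") auto

lemma twisted_mult_pn_n:
  "0 \<le> i \<Longrightarrow> j \<le> 0 \<Longrightarrow> i + j \<le> 0 \<Longrightarrow> twisted_mult i j a b = \<alpha> (- (i + j)) a * b"
  unfolding twisted_mult_def by (cases "i = 0"; cases "j = 0"; cases "i + j = 0") auto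

lemma twisted_mult_np_p:
  "i \<le> 0 \<Longrightarrow> 0 \<le> j \<Longrightarrow> 0 \<le> i + j \<Longrightarrow> twisted_mult i j a b = L (- i) (a * b)"
  unfolding twisted_mult_def
  by (cases "i = 0"; cases "j = 0") (auto simp: min_def add_nonneg_iff_neg_le add_nonpos_iff_le_neg)

lemma twisted_mult_np_n:
  "i \<le> 0 \<Longrightarrow> 0 \<le> j \<Longrightarrow> i + j \<le> 0 \<Longrightarrow> twisted_mult i j a b = L j (a * b)"
  unfolding twisted_mult_def
  by (cases "i = 0"; cases "j = 0") (auto simp: min_def add_nonneg_iff_neg_le add_nonpos_iff_le_neg)

lemma twisted_mult_cases:
  obtains (pp) "0 \<le> i" "0 \<le> j" "\<And>a b. twisted_mult i j a b = a * \<alpha> i b"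
  | (pn_p) "0 \<le> i" "j \<le> 0" "0 \<le> i + j" "\<And>a b. twisted_mult i j a b = a * \<alpha> (i + j) b"
  | (pn_n) "0 \<le> i" "j \<le> 0" "i + j \<le> 0" "\<And>a b. twisted_mult i j a b = \<alpha> (- (i + j)) a * b"
  | (nn) "i \<le> 0" "j \<le> 0" "\<And>a b. twisted_mult i j a b = \<alpha> (- j) a * b"
  | (np_p) "i \<le> 0" "0 \<le> j" "0 \<le> i + j" "\<And>a b. twisted_mult i j a b = L (- i) (a * b)"
  | (np_n) "i \<le> 0" "0 \<le> j" "i + j \<le> 0" "\<And>a b. twisted_mult i j a b = L j (a * b)"
  by (metis linear twisted_mult_pp twisted_mult_nn twisted_mult_pn_p twisted_mult_pn_n
      twisted_mult_np_p twisted_mult_np_n)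

lemma bounded_linear_twisted_mult_left: "bounded_linear (\<lambda>a. twisted_mult i j a b)"
proof -
  have alpha_mult: "bounded_linear (\<lambda>a. \<alpha> t a * b)" if "0 \<le> t" for t
    using bounded_linear_compose[OF bounded_linear_mult_left bounded_linear_alpha[OF that]]
    by (simp add: o_def)
  have L_mult: "bounded_linear (\<lambda>a. L t (a * b))" if "0 \<le> t" for t
    using bounded_linear_compose[OF bounded_linear_L[OF that] bounded_linear_mult_left]
    by (simp add: o_def)
  show ?thesis
  proof (cases rule: twisted_mult_cases[of i j])
    case pn_n
    then show ?thesis
      using alpha_mult[of "- (i + j)"] by (simp add: add_nonpos_iff_le_neg)
  next
    case nn
    then show ?thesis
      using alpha_mult[of "- j"] by simp
  next
    case np_p
    then show ?thesis
      using L_mult[of "- i"] by simp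
  next
    case np_n
    then show ?thesis
      using L_mult[of j] by simp
  qed (simp_all add: bounded_linear_mult_left)
qed

lemma bounded_linear_twisted_mult_right: "bounded_linear (\<lambda>b. twisted_mult i j a b)"
proof -
  have mult_alpha: "bounded_linear (\<lambda>b. a * \<alpha> t b)" if "0 \<le> t" for t
    using bounded_linear_compose[OF bounded_linear_mult_right bounded_linear_alpha[OF that]]
    by (simp add: o_def)
  have L_mult: "bounded_linear (\<lambda>b. L t (a * b))" if "0 \<le> t" for t
    using bounded_linear_compose[OF bounded_linear_L[OF that] bounded_linear_mult_right]
    by (simp add: o_def)
  show ?thesis
  proof (cases rule: twisted_mult_cases[of i j])
    case pp
    then show ?thesis
      using mult_alpha[of i] by simp
  next
    case pn_p
    then show ?thesis
      using mult_alpha[of "i + j"] by simp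
  next
    case np_p
    then show ?thesis
      using L_mult[of "- i"] by simp
  next
    case np_n
    then show ?thesis
      using L_mult[of j] by simp
  qed (simp_all add: bounded_linear_mult_right)
qed

lemma twisted_mult_sc_left: "twisted_mult i j (sc c a) b = sc c (twisted_mult i j a b)"
  by (cases rule: twisted_mult_cases[of i j])
     (auto simp: sc_mult_left[symmetric] alpha_sc L_sc add_nonpos_iff_le_neg)

lemma twisted_mult_sc_right: "twisted_mult i j a (sc c b) = sc c (twisted_mult i j a b)"
  by (cases rule: twisted_mult_cases[of i j])
     (auto simp: sc_mult_right[symmetric] alpha_sc L_sc add_nonpos_iff_le_neg)

lemma norm_twisted_mult_le:
  assumes a: "admissible i a" and b: "admissible j b"
  shows "norm (twisted_mult i j a b) \<le> norm a * norm b"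
proof -
  have mult_alpha: "norm (y * \<alpha> t z) \<le> norm y * norm z" if "0 \<le> t" for y z t
    by (rule order_trans[OF norm_mult_ineq]) (intro mult_left_mono norm_alpha_le that; simp)
  have alpha_mult: "norm (\<alpha> t y * z) \<le> norm y * norm z" if "0 \<le> t" for y z t
    by (rule order_trans[OF norm_mult_ineq]) (intro mult_right_mono norm_alpha_le that; simp)
  have L_mult: "norm (L t (a * b)) \<le> norm a * norm b"
    if "0 \<le> t" "\<alpha> t 1 * a = a" "b * \<alpha> t 1 = b" for t
  proof -
    have "norm (L t (a * b)) \<le> norm (a * b)"
      using that by (intro norm_L_le) (metis mult.assoc)+
    then show ?thesis
      using norm_mult_ineq[of a b] by simp
  qed
  show ?thesis
  proof (cases rule: twisted_mult_cases[of i j])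
    case np_p
    have "b * \<alpha> (- i) 1 = b"
      by (rule mult_alpha_one_mono[OF admissible_nonneg[OF b]])
         (use np_p in \<open>simp_all add: add_nonneg_iff_neg_le\<close>)
    then show ?thesis
      using np_p admissible_nonpos[OF a] L_mult[of "- i"] by simp
  next
    case np_n
    have "\<alpha> j 1 * a = a"
      by (rule alpha_one_mult_mono[OF admissible_nonpos[OF a]])
         (use np_n in \<open>simp_all add: add_nonpos_iff_le_neg\<close>)
    then show ?thesis
      using np_n admissible_nonneg[OF b] L_mult[of j] by simp
  qed (simp_all add: mult_alpha alpha_mult add_nonpos_iff_le_neg)
qed

lemma admissible_if_nonneg: "0 \<le> g \<Longrightarrow> z * \<alpha> g 1 = z \<Longrightarrow> admissible g z"
  unfolding admissible_def by (metis alpha_0 antisym minus_zero mult_1_left)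

lemma admissible_if_nonpos: "g \<le> 0 \<Longrightarrow> \<alpha> (- g) 1 * z = z \<Longrightarrow> admissible g z"
  unfolding admissible_def by (metis alpha_0 antisym mult_1_right)

lemma admissible_twisted_mult:
  assumes a: "admissible i a" and b: "admissible j b"
  shows "admissible (i + j) (twisted_mult i j a b)"
proof (cases rule: twisted_mult_cases[of i j])
  case pp
  have "\<alpha> i b * \<alpha> (i + j) 1 = \<alpha> i (b * \<alpha> j 1)"
    using pp by (simp add: alpha_alpha alpha_mult)
  then show ?thesis
    using pp admissible_nonneg[OF b pp(2)]
    by (intro admissible_if_nonneg add_nonneg_nonneg) (simp_all add: mult.assoc)
next
  case pn_p
  then show ?thesis
    by (intro admissible_if_nonneg) (simp_all add: mult.assoc alpha_mult[symmetric])
next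
  case pn_n
  then have "0 \<le> - (i + j)"
    by (simp add: add_nonpos_iff_le_neg)
  from alpha_mult[OF this, symmetric] show ?thesis
    using pn_n by (intro admissible_if_nonpos) (simp_all add: mult.assoc[symmetric])
next
  case nn
  have "\<alpha> (- (i + j)) 1 * \<alpha> (- j) a = \<alpha> (- j) (\<alpha> (- i) 1 * a)"
    using nn by (simp add: alpha_alpha alpha_mult add.commute)
  then show ?thesis
    using nn admissible_nonpos[OF a nn(1)]
    by (intro admissible_if_nonpos) (simp_all add: mult.assoc[symmetric] add_nonpos_nonpos)
next
  case np_p
  have "L (- i) (a * b) * \<alpha> (i + j) 1 = L (- i) (a * (b * \<alpha> j 1))"
    using np_p by (simp add: L_mult_alpha[symmetric] alpha_alpha mult.assoc)
  then show ?thesis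
    using np_p admissible_nonneg[OF b np_p(2)] by (intro admissible_if_nonneg) simp_all
next
  case np_n
  have "\<alpha> (- (i + j)) 1 * L j (a * b) = L j ((\<alpha> (- i) 1 * a) * b)"
    using np_n by (simp add: L_alpha_mult[symmetric] alpha_alpha mult.assoc add_nonpos_iff_le_neg)
  then show ?thesis
    using np_n admissible_nonpos[OF a np_n(1)] by (intro admissible_if_nonpos) simp_all
qed

lemma st_twisted_mult: "st (twisted_mult i j a b) = twisted_mult (- j) (- i) (st b) (st a)"
proof (cases rule: twisted_mult_cases[of i j])
  case pp
  then show ?thesis
    by (simp add: twisted_mult_nn st_mult alpha_st)
next
  case pn_p
  then show ?thesis
    by (simp add: twisted_mult_pn_n st_mult alpha_st add_nonpos_iff_le_neg add_nonneg_iff_neg_le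
        algebra_simps)
next
  case pn_n
  then show ?thesis
    by (simp add: twisted_mult_pn_p st_mult alpha_st add_nonpos_iff_le_neg add_nonneg_iff_neg_le
        algebra_simps)
next
  case nn
  then show ?thesis
    by (simp add: twisted_mult_pp st_mult alpha_st)
next
  case np_p
  have "twisted_mult (- j) (- i) (st b) (st a) = L (- i) (st b * st a)"
    by (rule twisted_mult_np_n)
       (use np_p in \<open>simp_all add: add_nonpos_iff_le_neg add_nonneg_iff_neg_le minus_le_iff\<close>)
  then show ?thesis
    using np_p by (simp add: st_mult L_st[symmetric])
next
  case np_n
  have "twisted_mult (- j) (- i) (st b) (st a) = L j (st b * st a)"
    using twisted_mult_np_p[of "- j" "- i" "st b" "st a"] np_n
    by (simp add: add_nonpos_iff_le_neg add_nonneg_iff_neg_le le_minus_iff)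
  then show ?thesis
    using np_n by (simp add: st_mult L_st[symmetric])
qed

lemma twisted_mult_one_left: "admissible j b \<Longrightarrow> twisted_mult 0 j 1 b = b"
  by (cases "0 \<le> j") (simp_all add: twisted_mult_pp twisted_mult_nn admissible_nonpos)

lemma twisted_mult_one_right: "admissible i a \<Longrightarrow> twisted_mult i 0 a 1 = a"
  by (cases "0 \<le> i") (simp_all add: twisted_mult_pp twisted_mult_nn admissible_nonneg)

lemma twisted_mult_assoc_ppp:
  assumes "0 \<le> i" "0 \<le> j" "0 \<le> k"
  shows "twisted_mult (i + j) k (twisted_mult i j a b) c
       = twisted_mult i (j + k) a (twisted_mult j k b c)"
  using assms by (simp add: twisted_mult_pp alpha_mult alpha_alpha mult.assoc add.assoc)

lemma twisted_mult_assoc_ppn: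
  assumes i: "0 \<le> i" and j: "0 \<le> j" and k: "k \<le> 0"
  shows "twisted_mult (i + j) k (twisted_mult i j a b) c
       = twisted_mult i (j + k) a (twisted_mult j k b c)"
proof -
  have ij: "0 \<le> i + j"
    using i j by simp
  consider (jk) "0 \<le> j + k" | (ijk) "j + k \<le> 0" "0 \<le> i + j + k" | (neg) "i + j + k \<le> 0"
    by (meson linear)
  then show ?thesis
  proof cases
    case jk
    then have "0 \<le> i + (j + k)"
      using i by simp
    then show ?thesis
      using i j k jk
      by (simp add: twisted_mult_pp twisted_mult_pn_p alpha_mult alpha_alpha mult.assoc add.assoc)
  next
    case ijk
    have "\<alpha> (i + j + k) (\<alpha> (- (j + k)) b) = \<alpha> i b"
      by (rule alpha_alpha_eq) (use ijk in \<open>simp_all only: neg_0_le_iff_le, simp add: algebra_simps\<close>)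
    then have "twisted_mult (i + j) k (twisted_mult i j a b) c
        = a * \<alpha> (i + j + k) (\<alpha> (- (j + k)) b) * \<alpha> (i + j + k) c"
      by (simp add: twisted_mult_pp[OF i j] twisted_mult_pn_p[OF ij k ijk(2)])
    also have "\<dots> = twisted_mult i (j + k) a (twisted_mult j k b c)"
      using ijk by (simp only: twisted_mult_pn_n[OF j k ijk(1)] twisted_mult_pn_p[OF i ijk(1)] add.assoc
          alpha_mult mult.assoc)
    finally show ?thesis .
  next
    case neg
    have s: "0 \<le> - (i + j + k)"
      using neg by (simp only: neg_0_le_iff_le)
    have jk: "j + k \<le> 0"
      using order_trans[OF add_increasing[OF i order_refl] neg[unfolded add.assoc]] .
    have "\<alpha> (- (i + j + k)) (\<alpha> i b) = \<alpha> (- (j + k)) b"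
      by (rule alpha_alpha_eq[OF s i]) (simp add: algebra_simps)
    then have "twisted_mult (i + j) k (twisted_mult i j a b) c
        = \<alpha> (- (i + j + k)) a * (\<alpha> (- (j + k)) b * c)"
      by (simp only: twisted_mult_pp[OF i j] twisted_mult_pn_n[OF ij k neg] alpha_mult[OF s] mult.assoc)
    also have "\<dots> = twisted_mult i (j + k) a (twisted_mult j k b c)"
      using neg by (simp only: twisted_mult_pn_n[OF j k jk] twisted_mult_pn_n[OF i jk] add.assoc)
    finally show ?thesis .
  qed
qed

lemma twisted_mult_assoc_npp:
  assumes i: "i \<le> 0" and j: "0 \<le> j" and k: "0 \<le> k"
  shows "twisted_mult (i + j) k (twisted_mult i j a b) c
       = twisted_mult i (j + k) a (twisted_mult j k b c)"
proof -
  have jk: "0 \<le> j + k"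
    using j k by simp
  have right: "twisted_mult j k b c = b * \<alpha> j c"
    by (rule twisted_mult_pp[OF j k])
  consider (ij) "0 \<le> i + j" | (ijk) "i + j \<le> 0" "0 \<le> i + j + k" | (neg) "i + j + k \<le> 0"
    by (meson linear)
  then show ?thesis
  proof cases
    case ij
    have ijk: "0 \<le> i + (j + k)"
      using add_nonneg_nonneg[OF ij k] by (simp only: add.assoc)
    have "\<alpha> (- i) (\<alpha> (i + j) c) = \<alpha> j c"
      by (rule alpha_alpha_eq) (use i ij in simp_all)
    then have "twisted_mult (i + j) k (twisted_mult i j a b) c = L (- i) (a * (b * \<alpha> j c))"
      by (simp add: twisted_mult_np_p[OF i j ij] twisted_mult_pp[OF ij k] L_mult_alpha[symmetric] i
          mult.assoc)
    also have "\<dots> = twisted_mult i (j + k) a (twisted_mult j k b c)"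
      by (simp only: right twisted_mult_np_p[OF i jk ijk])
    finally show ?thesis .
  next
    case ijk
    have ijk': "0 \<le> i + (j + k)"
      using ijk(2) by (simp only: add.assoc)
    have "L (- (i + j)) (L j x) = L (- i) x" for x
      by (rule L_L_eq) (use j ijk in \<open>simp_all only: neg_0_le_iff_le, simp\<close>)
    then have "twisted_mult (i + j) k (twisted_mult i j a b) c = L (- i) (a * (b * \<alpha> j c))"
      by (simp add: twisted_mult_np_n[OF i j ijk(1)] twisted_mult_np_p[OF ijk(1) k ijk(2)]
          L_mult_alpha[OF j, symmetric] mult.assoc)
    also have "\<dots> = twisted_mult i (j + k) a (twisted_mult j k b c)"
      by (simp only: right twisted_mult_np_p[OF i jk ijk'])
    finally show ?thesis .
  next
    case neg
    have ij: "i + j \<le> 0"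
      using order_trans[OF add_increasing2[OF k order_refl] neg] .
    have neg': "i + (j + k) \<le> 0"
      using neg by (simp only: add.assoc)
    have "twisted_mult (i + j) k (twisted_mult i j a b) c = L (j + k) (a * (b * \<alpha> j c))"
      by (simp add: twisted_mult_np_n[OF i j ij] twisted_mult_np_n[OF ij k neg]
          L_mult_alpha[OF j, symmetric] L_L j k mult.assoc)
    also have "\<dots> = twisted_mult i (j + k) a (twisted_mult j k b c)"
      by (simp only: right twisted_mult_np_n[OF i jk neg'])
    finally show ?thesis .
  qed
qed

text \<open>Only when the middle factor sits at a negative index do the two sides differ by the
  projections in \<open>\<alpha>\<^sub>x (L\<^sub>x y) = \<alpha>\<^sub>x(1) y \<alpha>\<^sub>x(1)\<close>; this is where admissibility is needed.\<close>

lemma alpha_L_corner: "0 \<le> x \<Longrightarrow> \<alpha> x 1 * y = y \<Longrightarrow> y * \<alpha> x 1 = y \<Longrightarrow> \<alpha> x (L x y) = y"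
  by (simp add: alpha_L)

lemma mult_alpha_L_absorb:
  assumes n: "0 \<le> n" and t: "0 \<le> t" and x: "n + t = x"
    and a: "a * \<alpha> t 1 = a" and y: "y * \<alpha> x 1 = y"
  shows "a * \<alpha> t (L x y) = a * L n y"
proof -
  have "L n y * \<alpha> t 1 = L n y"
    using L_mult_alpha[OF n, of y "\<alpha> t 1"] alpha_alpha_eq[OF n t x] y by simp
  moreover have "L x y = L t (L n y)"
    by (rule L_L_eq[OF n t x, symmetric])
  ultimately show ?thesis
    using a by (simp add: alpha_L[OF t]) (metis mult.assoc)
qed

lemma twisted_mult_assoc_pnp_p:
  assumes i: "0 \<le> i" and j: "j \<le> 0" and k: "0 \<le> k" and ij: "0 \<le> i + j"
    and b: "admissible j b" and c: "admissible k c"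
  shows "twisted_mult (i + j) k (twisted_mult i j a b) c
       = twisted_mult i (j + k) a (twisted_mult j k b c)"
proof -
  have lhs: "twisted_mult (i + j) k (twisted_mult i j a b) c = a * \<alpha> (i + j) (b * c)"
    by (simp add: twisted_mult_pn_p[OF i j ij] twisted_mult_pp[OF ij k] alpha_mult[OF ij] mult.assoc)
  have corner: "\<alpha> x (L x (b * c)) = b * c" if "0 \<le> x" "x \<le> - j" "x \<le> k" for x
  proof (rule alpha_L_corner[OF that(1)])
    show "\<alpha> x 1 * (b * c) = b * c"
      using that alpha_one_mult_mono[OF admissible_nonpos[OF b j]] by (simp add: mult.assoc[symmetric])
    show "b * c * \<alpha> x 1 = b * c"
      using that mult_alpha_one_mono[OF admissible_nonneg[OF c k]] by (simp add: mult.assoc)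
  qed
  consider (jk) "0 \<le> j + k" | (neg) "j + k \<le> 0"
    by (meson linear)
  then show ?thesis
  proof cases
    case jk
    have "\<alpha> (i + j) (b * c) = \<alpha> (i + j) (\<alpha> (- j) (L (- j) (b * c)))"
      using j jk by (simp add: corner add_nonneg_iff_neg_le)
    also have "\<dots> = \<alpha> i (L (- j) (b * c))"
      by (rule alpha_alpha_eq) (use ij j in simp_all)
    finally show ?thesis
      by (simp add: lhs twisted_mult_np_p[OF j k jk] twisted_mult_pp[OF i jk])
  next
    case neg
    have ijk: "0 \<le> i + (j + k)"
      using add_nonneg_nonneg[OF ij k] by (simp only: add.assoc)
    have "\<alpha> (i + j) (b * c) = \<alpha> (i + j) (\<alpha> k (L k (b * c)))"
      using k neg by (simp add: corner add_nonpos_iff_le_neg)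
    also have "\<dots> = \<alpha> (i + (j + k)) (L k (b * c))"
      by (rule alpha_alpha_eq) (use ij k in \<open>simp_all add: add.assoc\<close>)
    finally show ?thesis
      by (simp add: lhs twisted_mult_np_n[OF j k neg] twisted_mult_pn_p[OF i neg ijk])
  qed
qed

lemma twisted_mult_assoc_pnp_n:
  assumes i: "0 \<le> i" and j: "j \<le> 0" and k: "0 \<le> k" and ij: "i + j \<le> 0"
    and a: "admissible i a" and c: "admissible k c"
  shows "twisted_mult (i + j) k (twisted_mult i j a b) c
       = twisted_mult i (j + k) a (twisted_mult j k b c)"
proof -
  have n: "0 \<le> - (i + j)"
    using ij by (simp only: neg_0_le_iff_le)
  have corner: "a * \<alpha> t (L x (b * c)) = a * L (- (i + j)) (b * c)"
    if t: "0 \<le> t" "t \<le> i" and x: "- (i + j) + t = x" "x \<le> k" for t x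
  proof (rule mult_alpha_L_absorb[OF n t(1) x(1)])
    show "a * \<alpha> t 1 = a"
      using mult_alpha_one_mono[OF admissible_nonneg[OF a i] t] .
    have "0 \<le> x"
      using add_nonneg_nonneg[OF n t(1)] x(1) by simp
    then show "b * c * \<alpha> x 1 = b * c"
      using mult_alpha_one_mono[OF admissible_nonneg[OF c k] _ x(2)] by (simp add: mult.assoc)
  qed
  have lhs: "twisted_mult (i + j) k (twisted_mult i j a b) c = a * L (- (i + j)) (b * c)"
    if ijk: "0 \<le> i + j + k"
    by (simp only: twisted_mult_pn_n[OF i j ij] twisted_mult_np_p[OF ij k ijk] mult.assoc
        L_alpha_mult[OF n])
  consider (jk) "0 \<le> j + k" | (ijk) "j + k \<le> 0" "0 \<le> i + j + k" | (neg) "i + j + k \<le> 0"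
    by (meson linear)
  then show ?thesis
  proof cases
    case jk
    have "0 \<le> i + j + k"
      using add_nonneg_nonneg[OF i jk] by (simp only: add.assoc)
    moreover have "a * \<alpha> i (L (- j) (b * c)) = a * L (- (i + j)) (b * c)"
      by (rule corner) (use i jk in \<open>simp_all add: add_nonneg_iff_neg_le\<close>)
    ultimately show ?thesis
      by (simp add: lhs twisted_mult_np_p[OF j k jk] twisted_mult_pp[OF i jk])
  next
    case ijk
    have ijk': "0 \<le> i + (j + k)"
      using ijk(2) by (simp only: add.assoc)
    have "a * \<alpha> (i + (j + k)) (L k (b * c)) = a * L (- (i + j)) (b * c)"
      by (rule corner) (use ijk' add_decreasing2[OF ijk(1) order_refl] in \<open>simp_all add: algebra_simps\<close>)
    then show ?thesis
      by (simp add: lhs[OF ijk(2)] twisted_mult_np_n[OF j k ijk(1)] twisted_mult_pn_p[OF i ijk(1) ijk'])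
  next
    case neg
    have s: "0 \<le> - (i + j + k)"
      using neg by (simp only: neg_0_le_iff_le)
    have jk: "j + k \<le> 0"
      using order_trans[OF add_increasing[OF i order_refl] neg[unfolded add.assoc]] .
    have "\<alpha> (- (i + j)) a = \<alpha> k (\<alpha> (- (i + j + k)) a)"
      by (rule alpha_alpha_eq[OF k s, symmetric]) (simp add: algebra_simps)
    then have "twisted_mult (i + j) k (twisted_mult i j a b) c = \<alpha> (- (i + j + k)) a * L k (b * c)"
      by (simp add: twisted_mult_pn_n[OF i j ij] twisted_mult_np_n[OF ij k neg] L_alpha_mult[OF k]
          mult.assoc)
    also have "\<dots> = twisted_mult i (j + k) a (twisted_mult j k b c)"
      using neg by (simp only: twisted_mult_np_n[OF j k jk] twisted_mult_pn_n[OF i jk] add.assoc)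
    finally show ?thesis .
  qed
qed

lemma twisted_mult_assoc_two_nonneg:
  assumes a: "admissible i a" and b: "admissible j b" and c: "admissible k c"
    and two: "(0 \<le> i \<and> 0 \<le> j) \<or> (0 \<le> i \<and> 0 \<le> k) \<or> (0 \<le> j \<and> 0 \<le> k)"
  shows "twisted_mult (i + j) k (twisted_mult i j a b) c
       = twisted_mult i (j + k) a (twisted_mult j k b c)"
proof -
  consider "0 \<le> i" "0 \<le> j" "0 \<le> k" | "0 \<le> i" "0 \<le> j" "k \<le> 0"
    | "0 \<le> i" "j \<le> 0" "0 \<le> k" | "i \<le> 0" "0 \<le> j" "0 \<le> k"
    using two by (meson linear)
  then show ?thesis
  proof cases
    case 3
    then show ?thesis
      using twisted_mult_assoc_pnp_p[OF 3 _ b c] twisted_mult_assoc_pnp_n[OF 3 _ a c]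
      by (meson linear)
  qed (fact twisted_mult_assoc_ppp twisted_mult_assoc_ppn twisted_mult_assoc_npp)+
qed

text \<open>The involution reverses products and negates indices, so it exchanges the case of two
  nonnegative indices with that of two nonpositive ones.\<close>

lemma twisted_mult_assoc:
  assumes a: "admissible i a" and b: "admissible j b" and c: "admissible k c"
  shows "twisted_mult (i + j) k (twisted_mult i j a b) c
       = twisted_mult i (j + k) a (twisted_mult j k b c)"
proof (cases "(0 \<le> i \<and> 0 \<le> j) \<or> (0 \<le> i \<and> 0 \<le> k) \<or> (0 \<le> j \<and> 0 \<le> k)")
  case True
  then show ?thesis
    by (rule twisted_mult_assoc_two_nonneg[OF a b c])
next
  case False
  then have "(0 \<le> - k \<and> 0 \<le> - j) \<or> (0 \<le> - k \<and> 0 \<le> - i) \<or> (0 \<le> - j \<and> 0 \<le> - i)"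
    by (auto simp: not_le less_imp_le)
  from twisted_mult_assoc_two_nonneg[OF admissible_st[OF c] admissible_st[OF b] admissible_st[OF a] this]
  have "st (twisted_mult (i + j) k (twisted_mult i j a b) c)
      = st (twisted_mult i (j + k) a (twisted_mult j k b c))"
    by (simp only: st_twisted_mult minus_add)
  then show ?thesis
    by (metis st_st)
qed

section \<open>The algebra l1\<close>

lemma admissible_infsum:
  assumes "\<And>x. x \<in> A \<Longrightarrow> admissible g (f x)" and "f summable_on A"
  shows "admissible g (infsum f A)"
proof (unfold admissible_def, intro conjI impI)
  assume "0 \<le> g"
  have "infsum f A * \<alpha> g 1 = (\<Sum>\<^sub>\<infinity>x\<in>A. f x * \<alpha> g 1)"
    by (rule infsum_bounded_linear[OF bounded_linear_mult_left assms(2), symmetric])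
  also have "\<dots> = infsum f A"
    using assms(1) \<open>0 \<le> g\<close> by (intro infsum_cong) (simp add: admissible_nonneg)
  finally show "infsum f A * \<alpha> g 1 = infsum f A" .
next
  assume "g \<le> 0"
  have "\<alpha> (- g) 1 * infsum f A = (\<Sum>\<^sub>\<infinity>x\<in>A. \<alpha> (- g) 1 * f x)"
    by (rule infsum_bounded_linear[OF bounded_linear_mult_right assms(2), symmetric])
  also have "\<dots> = infsum f A"
    using assms(1) \<open>g \<le> 0\<close> by (intro infsum_cong) (simp add: admissible_nonpos)
  finally show "\<alpha> (- g) 1 * infsum f A = infsum f A" .
qed

lemma l1_set_iff: "a \<in> l1_set \<alpha> \<longleftrightarrow> (\<forall>g. admissible g (a g)) \<and> (\<lambda>g. norm (a g)) summable_on UNIV"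
proof -
  have right: "z \<in> {c * \<alpha> x 1 | c. True} \<longleftrightarrow> z * \<alpha> x 1 = z" if "0 \<le> x" for x z
  proof
    assume "z \<in> {c * \<alpha> x 1 | c. True}"
    then show "z * \<alpha> x 1 = z"
      by (auto simp: mult.assoc alpha_one_idem[OF that])
  next
    assume "z * \<alpha> x 1 = z"
    then show "z \<in> {c * \<alpha> x 1 | c. True}"
      by (intro CollectI exI[of _ z]) simp
  qed
  have left: "z \<in> {\<alpha> x 1 * c | c. True} \<longleftrightarrow> \<alpha> x 1 * z = z" if "0 \<le> x" for x z
  proof
    assume "z \<in> {\<alpha> x 1 * c | c. True}"
    then show "\<alpha> x 1 * z = z"
      by (auto simp: mult.assoc[symmetric] alpha_one_idem[OF that])
  next
    assume "\<alpha> x 1 * z = z"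
    then show "z \<in> {\<alpha> x 1 * c | c. True}"
      by (intro CollectI exI[of _ z]) simp
  qed
  have "(\<forall>x\<ge>0. a x \<in> {c * \<alpha> x 1 | c. True} \<and> a (- x) \<in> {\<alpha> x 1 * c | c. True})
      \<longleftrightarrow> (\<forall>x\<ge>0. a x * \<alpha> x 1 = a x \<and> \<alpha> x 1 * a (- x) = a (- x))"
    using right left by blast
  also have "\<dots> \<longleftrightarrow> (\<forall>g. admissible g (a g))"
    unfolding admissible_def by (metis minus_minus neg_0_le_iff_le)
  finally show ?thesis
    by (simp only: l1_set_def mem_Collect_eq)
qed

lemma l1_set_admissible: "a \<in> l1_set \<alpha> \<Longrightarrow> admissible g (a g)"
  and l1_set_summable: "a \<in> l1_set \<alpha> \<Longrightarrow> (\<lambda>g. norm (a g)) summable_on UNIV"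
  using l1_set_iff by blast+

lemma l1_norm_nonneg: "0 \<le> l1_norm a"
  unfolding l1_norm_def by (rule infsum_nonneg) simp

lemma norm_le_l1_norm: "a \<in> l1_set \<alpha> \<Longrightarrow> norm (a g) \<le> l1_norm a"
  unfolding l1_norm_def using finite_sum_le_infsum[OF l1_set_summable, of a "{g}"] by simp

definition twisted_conv :: "('g \<Rightarrow> 'a) \<Rightarrow> ('g \<Rightarrow> 'a) \<Rightarrow> 'g \<Rightarrow> 'a" where
  "twisted_conv a b g = (\<Sum>\<^sub>\<infinity>i. twisted_mult i (g - i) (a i) (b (g - i)))"

context
  fixes a b :: "'g \<Rightarrow> 'a"
  assumes a: "a \<in> l1_set \<alpha>" and b: "b \<in> l1_set \<alpha>"
begin

lemma norm_twisted_mult_l1_le: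
  "norm (twisted_mult i (g - i) (a i) (b (g - i))) \<le> norm (a i) * norm (b (g - i))"
  by (rule norm_twisted_mult_le) (use a b l1_set_admissible in auto)

lemma summable_on_norm_conv_terms: "(\<lambda>i. norm (a i) * norm (b (g - i))) summable_on UNIV"
proof (rule summable_on_comparison_test[OF summable_on_cmult_left[OF l1_set_summable[OF a]]])
  show "norm (a i) * norm (b (g - i)) \<le> norm (a i) * l1_norm b" for i
    by (simp add: mult_left_mono norm_le_l1_norm[OF b])
qed simp

lemma summable_on_norm_twisted_conv_terms:
  "(\<lambda>i. norm (twisted_mult i (g - i) (a i) (b (g - i)))) summable_on UNIV"
  by (rule summable_on_comparison_test[OF summable_on_norm_conv_terms[of g]])
     (simp_all add: norm_twisted_mult_l1_le)

lemma summable_on_twisted_conv_terms: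
  "(\<lambda>i. twisted_mult i (g - i) (a i) (b (g - i))) summable_on A"
  using summable_on_subset_banach[OF abs_summable_summable[OF summable_on_norm_twisted_conv_terms]]
  by blast

lemma admissible_twisted_conv: "admissible g (twisted_conv a b g)"
  unfolding twisted_conv_def
proof (rule admissible_infsum[OF _ summable_on_twisted_conv_terms])
  show "admissible g (twisted_mult i (g - i) (a i) (b (g - i)))" for i
    using admissible_twisted_mult[OF l1_set_admissible[OF a] l1_set_admissible[OF b], of i "g - i"]
    by simp
qed

lemma norm_twisted_conv_le: "norm (twisted_conv a b g) \<le> (\<Sum>\<^sub>\<infinity>i. norm (a i) * norm (b (g - i)))"
proof -
  have "norm (twisted_conv a b g) \<le> (\<Sum>\<^sub>\<infinity>i. norm (twisted_mult i (g - i) (a i) (b (g - i))))"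
    unfolding twisted_conv_def by (rule norm_infsum_bound) (rule summable_on_norm_twisted_conv_terms)
  also have "\<dots> \<le> (\<Sum>\<^sub>\<infinity>i. norm (a i) * norm (b (g - i)))"
    by (rule infsum_mono[OF summable_on_norm_twisted_conv_terms summable_on_norm_conv_terms])
       (rule norm_twisted_mult_l1_le)
  finally show ?thesis .
qed

lemma
  shows summable_on_norm_twisted_conv: "(\<lambda>g. norm (twisted_conv a b g)) summable_on UNIV"
    and l1_norm_twisted_conv_le: "l1_norm (twisted_conv a b) \<le> l1_norm a * l1_norm b"
proof -
  have nonneg: "0 \<le> norm (a i)" "0 \<le> norm (b i)" for i
    by simp_all
  note conv = summable_on_convolution[OF l1_set_summable[OF a] l1_set_summable[OF b] nonneg]
  have rows: "(\<lambda>g. \<Sum>\<^sub>\<infinity>i. norm (a i) * norm (b (g - i))) summable_on UNIV"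
    using summable_on_Sigma_banach[of "\<lambda>g i. norm (a i) * norm (b (g - i))" UNIV "\<lambda>_. UNIV"] conv
    by simp
  show summable: "(\<lambda>g. norm (twisted_conv a b g)) summable_on UNIV"
    by (rule summable_on_comparison_test[OF rows]) (simp_all add: norm_twisted_conv_le)
  have "l1_norm (twisted_conv a b) \<le> (\<Sum>\<^sub>\<infinity>g. \<Sum>\<^sub>\<infinity>i. norm (a i) * norm (b (g - i)))"
    unfolding l1_norm_def by (rule infsum_mono[OF summable rows]) (rule norm_twisted_conv_le)
  also have "\<dots> = (\<Sum>\<^sub>\<infinity>(g, i). norm (a i) * norm (b (g - i)))"
    using infsum_Sigma'_banach[of "\<lambda>g i. norm (a i) * norm (b (g - i))" UNIV "\<lambda>_. UNIV"] conv
    by simp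
  also have "\<dots> = l1_norm a * l1_norm b"
    unfolding l1_norm_def
    by (rule infsum_convolution[OF l1_set_summable[OF a] l1_set_summable[OF b] nonneg])
  finally show "l1_norm (twisted_conv a b) \<le> l1_norm a * l1_norm b" .
qed

lemma twisted_conv_mem_l1_set: "twisted_conv a b \<in> l1_set \<alpha>"
  unfolding l1_set_iff using admissible_twisted_conv summable_on_norm_twisted_conv by blast

end

lemma summable_on_twisted_conv_assoc_terms:
  assumes a: "a \<in> l1_set \<alpha>" and b: "b \<in> l1_set \<alpha>" and c: "c \<in> l1_set \<alpha>"
  shows "(\<lambda>(h, i). twisted_mult h (g - h) (twisted_mult i (h - i) (a i) (b (h - i))) (c (g - h)))
    summable_on UNIV"
proof -
  have nonneg: "0 \<le> norm (a i)" "0 \<le> norm (b i)" for i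
    by simp_all
  have bound: "norm (twisted_mult h (g - h) (twisted_mult i (h - i) (a i) (b (h - i))) (c (g - h)))
      \<le> norm (a i) * norm (b (h - i)) * l1_norm c" for h i
  proof -
    have "norm (twisted_mult h (g - h) (twisted_mult i (h - i) (a i) (b (h - i))) (c (g - h)))
        \<le> norm (twisted_mult i (h - i) (a i) (b (h - i))) * norm (c (g - h))"
      using admissible_twisted_mult[OF l1_set_admissible[OF a] l1_set_admissible[OF b], of i "h - i"]
      by (intro norm_twisted_mult_le l1_set_admissible[OF c]) simp
    also have "\<dots> \<le> norm (a i) * norm (b (h - i)) * l1_norm c"
      by (intro mult_mono norm_twisted_mult_l1_le[OF a b] norm_le_l1_norm[OF c]) simp_all
    finally show ?thesis .
  qed
  have "(\<lambda>(h, i). norm (a i) * norm (b (h - i)) * l1_norm c) summable_on UNIV"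
    using summable_on_cmult_left[OF summable_on_convolution[OF l1_set_summable[OF a]
          l1_set_summable[OF b] nonneg], of "l1_norm c"]
    by (simp add: case_prod_unfold)
  then have "(\<lambda>(h, i). twisted_mult h (g - h) (twisted_mult i (h - i) (a i) (b (h - i))) (c (g - h)))
      abs_summable_on UNIV"
    by (rule summable_on_comparison_test) (auto simp: bound)
  then show ?thesis
    by (rule abs_summable_summable)
qed

lemma twisted_conv_assoc:
  assumes a: "a \<in> l1_set \<alpha>" and b: "b \<in> l1_set \<alpha>" and c: "c \<in> l1_set \<alpha>"
  shows "twisted_conv (twisted_conv a b) c = twisted_conv a (twisted_conv b c)"
proof
  fix g
  define G where "G h i = twisted_mult h (g - h) (twisted_mult i (h - i) (a i) (b (h - i))) (c (g - h))"
    for h i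
  have shift: "G h i = twisted_mult i (g - i) (a i) (twisted_mult (h - i) (g - h) (b (h - i)) (c (g - h)))"
    for h i
  proof -
    have "G h i = twisted_mult (i + (h - i)) (g - h) (twisted_mult i (h - i) (a i) (b (h - i))) (c (g - h))"
      unfolding G_def by simp
    also have "\<dots> = twisted_mult i (h - i + (g - h)) (a i)
        (twisted_mult (h - i) (g - h) (b (h - i)) (c (g - h)))"
      by (rule twisted_mult_assoc) (simp_all add: l1_set_admissible a b c)
    finally show ?thesis
      by simp
  qed
  have "twisted_conv (twisted_conv a b) c g = (\<Sum>\<^sub>\<infinity>h. \<Sum>\<^sub>\<infinity>i. G h i)"
    unfolding twisted_conv_def G_def
    by (intro infsum_cong infsum_bounded_linear[OF bounded_linear_twisted_mult_left
          summable_on_twisted_conv_terms[OF a b], symmetric])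
  also have "\<dots> = (\<Sum>\<^sub>\<infinity>i. \<Sum>\<^sub>\<infinity>h. G h i)"
    by (rule infsum_swap_banach) (use summable_on_twisted_conv_assoc_terms[OF a b c] in \<open>simp add: G_def\<close>)
  also have "\<dots> = (\<Sum>\<^sub>\<infinity>i. \<Sum>\<^sub>\<infinity>j. twisted_mult i (g - i) (a i) (twisted_mult j (g - i - j) (b j) (c (g - i - j))))"
  proof (rule infsum_cong)
    show "(\<Sum>\<^sub>\<infinity>h. G h i)
        = (\<Sum>\<^sub>\<infinity>j. twisted_mult i (g - i) (a i) (twisted_mult j (g - i - j) (b j) (c (g - i - j))))" for i
      by (rule infsum_reindex_bij_witness[where j="\<lambda>h. h - i" and i="\<lambda>j. i + j"])
         (simp_all add: shift algebra_simps)
  qed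
  also have "\<dots> = twisted_conv a (twisted_conv b c) g"
    unfolding twisted_conv_def
    by (intro infsum_cong infsum_bounded_linear[OF bounded_linear_twisted_mult_right
          summable_on_twisted_conv_terms[OF b c]])
  finally show "twisted_conv (twisted_conv a b) c g = twisted_conv a (twisted_conv b c) g" .
qed

lemma l1_mult_nonneg_eq:
  assumes a: "a \<in> l1_set \<alpha>" and b: "b \<in> l1_set \<alpha>" and g: "0 \<le> g"
  shows "l1_mult \<alpha> L a b g = twisted_conv a b g"
proof -
  let ?F = "\<lambda>i. twisted_mult i (g - i) (a i) (b (g - i))"
  have "{i. g < i} \<union> {i. i < 0} \<union> {i. 0 \<le> i \<and> i \<le> g} = UNIV"
    by auto
  then have "twisted_conv a b g = infsum ?F ({i. g < i} \<union> {i. i < 0} \<union> {i. 0 \<le> i \<and> i \<le> g})"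
    unfolding twisted_conv_def by simp
  also have "\<dots> = infsum ?F {i. g < i} + infsum ?F {i. i < 0} + infsum ?F {i. 0 \<le> i \<and> i \<le> g}"
    by (rule infsum_Un3) (use summable_on_twisted_conv_terms[OF a b] g in auto)
  finally have "twisted_conv a b g = \<dots>" .
  moreover have "infsum ?F {i. g < i}
      = (\<Sum>\<^sub>\<infinity>(x, y)\<in>{(x, y). 0 < x \<and> 0 < y \<and> g = x - y}. a x * \<alpha> (x - y) (b (- y)))"
  proof (rule infsum_reindex_bij_witness[where j="\<lambda>i. (i, i - g)" and i="fst :: 'g \<times> 'g \<Rightarrow> 'g"])
    fix i :: 'g assume "i \<in> {i. g < i}"
    then have i: "g < i" "0 \<le> i"
      using g by auto
    then show "(i, i - g) \<in> {(x, y). 0 < x \<and> 0 < y \<and> g = x - y}"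
      using g by auto
    show "(case (i, i - g) of (x, y) \<Rightarrow> a x * \<alpha> (x - y) (b (- y))) = ?F i"
      using i g by (simp add: twisted_mult_pn_p)
  qed auto
  moreover have "infsum ?F {i. i < 0}
      = (\<Sum>\<^sub>\<infinity>(x, y)\<in>{(x, y). 0 < x \<and> 0 < y \<and> g = y - x}. L x (a (- x) * b y))"
  proof (rule infsum_reindex_bij_witness[where j="\<lambda>i. (- i, g - i)" and i="\<lambda>p::'g \<times> 'g. - fst p"])
    fix i :: 'g assume "i \<in> {i. i < 0}"
    then have i: "i < 0"
      by simp
    then show "(- i, g - i) \<in> {(x, y). 0 < x \<and> 0 < y \<and> g = y - x}"
      using g by auto
    show "(case (- i, g - i) of (x, y) \<Rightarrow> L x (a (- x) * b y)) = ?F i"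
      using i g by (simp add: twisted_mult_np_p)
  qed auto
  moreover have "infsum ?F {i. 0 \<le> i \<and> i \<le> g}
      = (\<Sum>\<^sub>\<infinity>(x, y)\<in>{(x, y). 0 \<le> x \<and> 0 \<le> y \<and> g = x + y}. a x * \<alpha> x (b y))"
    by (rule infsum_reindex_bij_witness[where j="\<lambda>i. (i, g - i)" and i="fst :: 'g \<times> 'g \<Rightarrow> 'g"])
       (auto simp: twisted_mult_pp)
  ultimately show ?thesis
    using g unfolding l1_mult_def by simp
qed

lemma l1_mult_neg_eq:
  assumes a: "a \<in> l1_set \<alpha>" and b: "b \<in> l1_set \<alpha>" and g: "g < 0"
  shows "l1_mult \<alpha> L a b g = twisted_conv a b g"
proof -
  let ?F = "\<lambda>i. twisted_mult i (g - i) (a i) (b (g - i))"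
  have "{i. 0 < i} \<union> {i. i < g} \<union> {i. g \<le> i \<and> i \<le> 0} = UNIV"
    by auto
  then have "twisted_conv a b g = infsum ?F ({i. 0 < i} \<union> {i. i < g} \<union> {i. g \<le> i \<and> i \<le> 0})"
    unfolding twisted_conv_def by simp
  also have "\<dots> = infsum ?F {i. 0 < i} + infsum ?F {i. i < g} + infsum ?F {i. g \<le> i \<and> i \<le> 0}"
    by (rule infsum_Un3) (use summable_on_twisted_conv_terms[OF a b] g in auto)
  finally have "twisted_conv a b g = \<dots>" .
  moreover have "infsum ?F {i. 0 < i}
      = (\<Sum>\<^sub>\<infinity>(x, y)\<in>{(x, y). 0 < x \<and> 0 < y \<and> g = x - y}. \<alpha> (y - x) (a x) * b (- y))"
  proof (rule infsum_reindex_bij_witness[where j="\<lambda>i. (i, i - g)" and i="fst :: 'g \<times> 'g \<Rightarrow> 'g"])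
    fix i :: 'g assume "i \<in> {i. 0 < i}"
    then have i: "0 < i"
      by simp
    then show "(i, i - g) \<in> {(x, y). 0 < x \<and> 0 < y \<and> g = x - y}"
      using g by auto
    show "(case (i, i - g) of (x, y) \<Rightarrow> \<alpha> (y - x) (a x) * b (- y)) = ?F i"
      using i g by (simp add: twisted_mult_pn_n)
  qed auto
  moreover have "infsum ?F {i. i < g}
      = (\<Sum>\<^sub>\<infinity>(x, y)\<in>{(x, y). 0 < x \<and> 0 < y \<and> g = y - x}. L y (a (- x) * b y))"
  proof (rule infsum_reindex_bij_witness[where j="\<lambda>i. (- i, g - i)" and i="\<lambda>p::'g \<times> 'g. - fst p"])
    fix i :: 'g assume "i \<in> {i. i < g}"
    then have i: "i < g"
      by simp
    then show "(- i, g - i) \<in> {(x, y). 0 < x \<and> 0 < y \<and> g = y - x}"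
      using g by auto
    show "(case (- i, g - i) of (x, y) \<Rightarrow> L y (a (- x) * b y)) = ?F i"
      using i g by (simp add: twisted_mult_np_n)
  qed auto
  moreover have "infsum ?F {i. g \<le> i \<and> i \<le> 0}
      = (\<Sum>\<^sub>\<infinity>(x, y)\<in>{(x, y). 0 \<le> x \<and> 0 \<le> y \<and> g = - x - y}. \<alpha> y (a (- x)) * b (- y))"
    by (rule infsum_reindex_bij_witness[where j="\<lambda>i. (- i, i - g)" and i="\<lambda>p::'g \<times> 'g. - fst p"])
       (auto simp: twisted_mult_nn)
  ultimately show ?thesis
    using g unfolding l1_mult_def by simp
qed

lemma l1_mult_eq_twisted_conv:
  "a \<in> l1_set \<alpha> \<Longrightarrow> b \<in> l1_set \<alpha> \<Longrightarrow> l1_mult \<alpha> L a b = twisted_conv a b"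
  by (rule ext) (metis l1_mult_nonneg_eq l1_mult_neg_eq linorder_not_le)

lemma l1_zero_mem: "l1_zero \<in> l1_set \<alpha>"
  unfolding l1_set_iff l1_zero_def by (simp add: admissible_zero)

lemma l1_unit_mem: "l1_unit \<in> l1_set \<alpha>"
  unfolding l1_set_iff
proof
  show "\<forall>g. admissible g (l1_unit g)"
    unfolding l1_unit_def admissible_def by simp
  show "(\<lambda>g. norm (l1_unit g :: 'a)) summable_on UNIV"
    by (rule finite_nonzero_values_imp_summable_on) (simp add: l1_unit_def)
qed

lemma l1_add_mem:
  assumes a: "a \<in> l1_set \<alpha>" and b: "b \<in> l1_set \<alpha>"
  shows "l1_add a b \<in> l1_set \<alpha>"
  unfolding l1_set_iff l1_add_def
proof
  show "\<forall>g. admissible g (a g + b g)"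
    using l1_set_admissible[OF a] l1_set_admissible[OF b] admissible_add by blast
  show "(\<lambda>g. norm (a g + b g)) summable_on UNIV"
    by (rule summable_on_comparison_test[OF summable_on_add[OF l1_set_summable[OF a] l1_set_summable[OF b]]])
       (simp_all add: norm_triangle_ineq)
qed

lemma l1_scale_mem: "a \<in> l1_set \<alpha> \<Longrightarrow> l1_scale sc c a \<in> l1_set \<alpha>"
  unfolding l1_set_iff l1_scale_def by (simp add: admissible_sc norm_sc summable_on_cmult_right)

lemma infsum_reflect: "(\<Sum>\<^sub>\<infinity>g. f (- g)) = infsum f (UNIV :: 'g set)"
  and summable_on_reflect: "(\<lambda>g. f (- g)) summable_on UNIV \<longleftrightarrow> f summable_on (UNIV :: 'g set)"
  by (rule infsum_reindex_bij_witness[where j=uminus and i=uminus]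
      summable_on_reindex_bij_witness[where j=uminus and i=uminus]; simp)+

lemma l1_star_mem:
  assumes a: "a \<in> l1_set \<alpha>"
  shows "l1_star st a \<in> l1_set \<alpha>"
  unfolding l1_set_iff l1_star_def
proof
  show "\<forall>g. admissible g (st (a (- g)))"
    using admissible_st[OF l1_set_admissible[OF a]] by (metis minus_minus)
  show "(\<lambda>g. norm (st (a (- g)))) summable_on UNIV"
    using summable_on_reflect[of "\<lambda>g. norm (a g)"] l1_set_summable[OF a] by simp
qed

lemma l1_diff: "l1_add a (l1_scale sc (-1) b) = (\<lambda>g. a g - b g)"
  unfolding l1_add_def l1_scale_def by (simp add: sc_minus_one)

lemma l1_norm_eq_0_iff:
  assumes a: "a \<in> l1_set \<alpha>"
  shows "l1_norm a = 0 \<longleftrightarrow> a = l1_zero"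
proof
  assume "l1_norm a = 0"
  then have "norm (a g) = 0" for g
    by (intro nonneg_infsum_le_0D[where A=UNIV]) (use l1_set_summable[OF a] in \<open>simp_all add: l1_norm_def\<close>)
  then show "a = l1_zero"
    unfolding l1_zero_def by auto
qed (simp add: l1_norm_def l1_zero_def)

lemma l1_norm_add_le:
  assumes a: "a \<in> l1_set \<alpha>" and b: "b \<in> l1_set \<alpha>"
  shows "l1_norm (l1_add a b) \<le> l1_norm a + l1_norm b"
proof -
  have "l1_norm (l1_add a b) \<le> (\<Sum>\<^sub>\<infinity>g. norm (a g) + norm (b g))"
    unfolding l1_norm_def
    by (rule infsum_mono[OF l1_set_summable[OF l1_add_mem[OF a b]]
          summable_on_add[OF l1_set_summable[OF a] l1_set_summable[OF b]]])
       (simp add: l1_add_def norm_triangle_ineq)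
  also have "\<dots> = l1_norm a + l1_norm b"
    unfolding l1_norm_def by (rule infsum_add[OF l1_set_summable[OF a] l1_set_summable[OF b]])
  finally show ?thesis .
qed

lemma l1_norm_scale: "l1_norm (l1_scale sc c a) = cmod c * l1_norm a"
  unfolding l1_norm_def l1_scale_def norm_sc by (rule infsum_cmult_right')

lemma l1_norm_unit: "l1_norm (l1_unit :: 'g \<Rightarrow> 'a) = 1"
proof -
  have "l1_norm (l1_unit :: 'g \<Rightarrow> 'a) = (\<Sum>\<^sub>\<infinity>g\<in>{0::'g}. norm (l1_unit g :: 'a))"
    unfolding l1_norm_def by (rule infsum_cong_neutral) (auto simp: l1_unit_def)
  then show ?thesis
    by (simp add: l1_unit_def)
qed

lemma l1_norm_star: "l1_norm (l1_star st a) = l1_norm (a :: 'g \<Rightarrow> 'a)"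
  unfolding l1_norm_def l1_star_def using infsum_reflect[of "\<lambda>g. norm (a g)"] by simp

lemma twisted_mult_zero_left [simp]: "twisted_mult i j 0 b = 0"
  using linear_0[OF bounded_linear.linear[OF bounded_linear_twisted_mult_left]] by simp

lemma twisted_mult_zero_right [simp]: "twisted_mult i j a 0 = 0"
  using linear_0[OF bounded_linear.linear[OF bounded_linear_twisted_mult_right]] by simp

lemma twisted_conv_unit_left: "a \<in> l1_set \<alpha> \<Longrightarrow> twisted_conv l1_unit a = a"
proof (rule ext)
  fix g assume a: "a \<in> l1_set \<alpha>"
  have "twisted_conv l1_unit a g = (\<Sum>\<^sub>\<infinity>i\<in>{0}. twisted_mult i (g - i) (l1_unit i) (a (g - i)))"
    unfolding twisted_conv_def by (rule infsum_cong_neutral) (auto simp: l1_unit_def)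
  then show "twisted_conv l1_unit a g = a g"
    by (simp add: l1_unit_def twisted_mult_one_left l1_set_admissible[OF a])
qed

lemma twisted_conv_unit_right: "a \<in> l1_set \<alpha> \<Longrightarrow> twisted_conv a l1_unit = a"
proof (rule ext)
  fix g assume a: "a \<in> l1_set \<alpha>"
  have "twisted_conv a l1_unit g = (\<Sum>\<^sub>\<infinity>i\<in>{g}. twisted_mult i (g - i) (a i) (l1_unit (g - i)))"
    unfolding twisted_conv_def by (rule infsum_cong_neutral) (auto simp: l1_unit_def)
  then show "twisted_conv a l1_unit g = a g"
    by (simp add: l1_unit_def twisted_mult_one_right l1_set_admissible[OF a])
qed

lemma twisted_conv_add_right:
  assumes a: "a \<in> l1_set \<alpha>" and b: "b \<in> l1_set \<alpha>" and c: "c \<in> l1_set \<alpha>"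
  shows "twisted_conv a (l1_add b c) = l1_add (twisted_conv a b) (twisted_conv a c)"
  unfolding twisted_conv_def l1_add_def
    linear_add[OF bounded_linear.linear[OF bounded_linear_twisted_mult_right]]
  by (intro ext infsum_add summable_on_twisted_conv_terms a b c)

lemma twisted_conv_add_left:
  assumes a: "a \<in> l1_set \<alpha>" and b: "b \<in> l1_set \<alpha>" and c: "c \<in> l1_set \<alpha>"
  shows "twisted_conv (l1_add a b) c = l1_add (twisted_conv a c) (twisted_conv b c)"
  unfolding twisted_conv_def l1_add_def
    linear_add[OF bounded_linear.linear[OF bounded_linear_twisted_mult_left]]
  by (intro ext infsum_add summable_on_twisted_conv_terms a b c)

lemma twisted_conv_scale_left:
  assumes a: "a \<in> l1_set \<alpha>" and b: "b \<in> l1_set \<alpha>"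
  shows "twisted_conv (l1_scale sc c a) b = l1_scale sc c (twisted_conv a b)"
  unfolding twisted_conv_def l1_scale_def twisted_mult_sc_left
  by (intro ext infsum_bounded_linear bounded_linear_sc summable_on_twisted_conv_terms a b)

lemma twisted_conv_scale_right:
  assumes a: "a \<in> l1_set \<alpha>" and b: "b \<in> l1_set \<alpha>"
  shows "twisted_conv a (l1_scale sc c b) = l1_scale sc c (twisted_conv a b)"
  unfolding twisted_conv_def l1_scale_def twisted_mult_sc_right
  by (intro ext infsum_bounded_linear bounded_linear_sc summable_on_twisted_conv_terms a b)

lemma l1_star_twisted_conv:
  assumes a: "a \<in> l1_set \<alpha>" and b: "b \<in> l1_set \<alpha>"
  shows "l1_star st (twisted_conv a b) = twisted_conv (l1_star st b) (l1_star st a)"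
proof (rule ext)
  fix g
  have "st (twisted_conv a b (- g)) = (\<Sum>\<^sub>\<infinity>i. st (twisted_mult i (- g - i) (a i) (b (- g - i))))"
    unfolding twisted_conv_def
    by (rule infsum_bounded_linear[OF bounded_linear_st summable_on_twisted_conv_terms[OF a b], symmetric])
  also have "\<dots> = (\<Sum>\<^sub>\<infinity>i. twisted_mult (g + i) (- i) (st (b (- (g + i)))) (st (a i)))"
  proof -
    have "- (- g - i) = g + i" "- g - i = - (g + i)" for i
      by (simp_all add: algebra_simps)
    then show ?thesis
      by (simp only: st_twisted_mult)
  qed
  also have "\<dots> = twisted_conv (l1_star st b) (l1_star st a) g"
    unfolding twisted_conv_def l1_star_def
    by (rule infsum_reindex_bij_witness[where j="\<lambda>i. g + i" and i="\<lambda>k. k - g"]) (auto simp: algebra_simps)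
  finally show "l1_star st (twisted_conv a b) g = twisted_conv (l1_star st b) (l1_star st a) g"
    unfolding l1_star_def .
qed

lemma admissible_limit:
  assumes "\<And>n. admissible g (f n)" and "f \<longlonglongrightarrow> z"
  shows "admissible g z"
proof (unfold admissible_def, intro conjI impI)
  assume "0 \<le> g"
  have "(\<lambda>n. f n * \<alpha> g 1) \<longlonglongrightarrow> z * \<alpha> g 1"
    by (intro tendsto_mult assms(2) tendsto_const)
  then show "z * \<alpha> g 1 = z"
    using assms \<open>0 \<le> g\<close> by (simp add: admissible_nonneg LIMSEQ_unique)
next
  assume "g \<le> 0"
  have "(\<lambda>n. \<alpha> (- g) 1 * f n) \<longlonglongrightarrow> \<alpha> (- g) 1 * z"
    by (intro tendsto_mult assms(2) tendsto_const)
  then show "\<alpha> (- g) 1 * z = z"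
    using assms \<open>g \<le> 0\<close> by (simp add: admissible_nonpos LIMSEQ_unique)
qed

lemma l1_complete:
  assumes f: "\<And>n. f n \<in> l1_set \<alpha>"
    and cauchy: "\<forall>e>0. \<exists>N. \<forall>m\<ge>N. \<forall>n\<ge>N. l1_norm (l1_add (f m) (l1_scale sc (-1) (f n))) < e"
  shows "\<exists>l\<in>l1_set \<alpha>. (\<lambda>n. l1_norm (l1_add (f n) (l1_scale sc (-1) l))) \<longlonglongrightarrow> 0"
proof -
  have summable: "(\<lambda>i. norm (f m i - f n i)) summable_on UNIV" for m n
    using l1_set_summable[OF l1_add_mem[OF f l1_scale_mem[OF f, where c="-1"]]] by (simp add: l1_diff)
  have "\<exists>N. \<forall>m\<ge>N. \<forall>n\<ge>N. (\<Sum>\<^sub>\<infinity>i. norm (f m i - f n i)) < e" if "0 < e" for e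
    using cauchy that unfolding l1_diff l1_norm_def by blast
  then obtain l where lim: "\<And>i. (\<lambda>n. f n i) \<longlonglongrightarrow> l i"
    and tail: "\<And>e. 0 < e \<Longrightarrow> \<exists>N. \<forall>n\<ge>N. (\<lambda>i. norm (l i - f n i)) summable_on UNIV
                                       \<and> (\<Sum>\<^sub>\<infinity>i. norm (l i - f n i)) \<le> e"
    using l1_cauchy_pointwise_limit[of f, OF summable] by blast
  have "l \<in> l1_set \<alpha>"
    unfolding l1_set_iff
  proof
    show "\<forall>g. admissible g (l g)"
      using admissible_limit[OF l1_set_admissible[OF f] lim] by blast
    obtain N where "(\<lambda>i. norm (l i - f N i)) summable_on UNIV"
      using tail[of 1] by auto
    then show "(\<lambda>i. norm (l i)) summable_on UNIV"
      by (rule summable_on_comparison_test[OF summable_on_add[OF _ l1_set_summable[OF f, of N]]])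
         (simp_all add: norm_triangle_sub[of "l _" "f N _"] add.commute)
  qed
  moreover have "(\<lambda>n. l1_norm (l1_add (f n) (l1_scale sc (-1) l))) \<longlonglongrightarrow> 0"
  proof (rule LIMSEQ_I)
    fix r :: real assume "0 < r"
    then obtain N where N: "\<forall>n\<ge>N. (\<Sum>\<^sub>\<infinity>i. norm (l i - f n i)) \<le> r / 2"
      using tail[of "r / 2"] by auto
    have "l1_norm (l1_add (f n) (l1_scale sc (-1) l)) = (\<Sum>\<^sub>\<infinity>i. norm (l i - f n i))" for n
      unfolding l1_diff l1_norm_def by (simp add: norm_minus_commute)
    then have "norm (l1_norm (l1_add (f n) (l1_scale sc (-1) l)) - 0) < r" if "N \<le> n" for n
      using N[rule_format, OF that] \<open>0 < r\<close> l1_norm_nonneg[of "l1_add (f n) (l1_scale sc (-1) l)"]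
      by simp
    then show "\<exists>N. \<forall>n\<ge>N. norm (l1_norm (l1_add (f n) (l1_scale sc (-1) l)) - 0) < r"
      by blast
  qed
  ultimately show ?thesis
    by blast
qed

end

theorem theorem4p3:
  fixes sc :: "complex \<Rightarrow> 'a::{real_normed_algebra_1,banach} \<Rightarrow> 'a"
    and st :: "'a \<Rightarrow> 'a"
    and \<alpha> :: "'g::linordered_ab_group_add \<Rightarrow> 'a \<Rightarrow> 'a"
    and L :: "'g \<Rightarrow> 'a \<Rightarrow> 'a"
  assumes "cstar_algebra sc st"
    and "endo_semigroup sc st \<alpha>"
    and "complete_transfer_action sc st \<alpha> L"
  shows "unital_banach_star_algebra (l1_set \<alpha>) l1_add l1_zero (l1_scale sc)
           (l1_mult \<alpha> L) (l1_star st) l1_norm l1_unit"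
proof -
  interpret l1_system sc st \<alpha> L
    by (intro l1_system.intro l1_system_axioms.intro cstar.intro assms)
  show ?thesis
    unfolding unital_banach_star_algebra_def
    by (intro conjI ballI allI impI)
       (simp_all add: l1_zero_mem l1_unit_mem l1_add_mem l1_scale_mem l1_star_mem
        l1_mult_eq_twisted_conv twisted_conv_mem_l1_set twisted_conv_assoc
        twisted_conv_add_left twisted_conv_add_right twisted_conv_scale_left twisted_conv_scale_right
        twisted_conv_unit_left twisted_conv_unit_right l1_star_twisted_conv
        l1_norm_nonneg l1_norm_eq_0_iff l1_norm_add_le l1_norm_scale l1_norm_unit l1_norm_star
        l1_norm_twisted_conv_le l1_complete,
        simp_all add: l1_add_def l1_zero_def l1_scale_def l1_star_def fun_eq_iff
        sc_sc sc_add_scalar sc_add sc_minus_one st_add st_sc)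
qed

end
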